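(* Let $f\in\mathrm{Aut}(\mathbb B)$, $f\neq\mathrm{Id}$, be a regular Möbius transformation of $\mathbb B$ which is not elliptic, and suppose $f(\mathbb B_I)\subseteq\mathbb B_I$ for some $I\in\mathbb S$. Then there is a point $\tau\in\partial\mathbb B$ which is a fixed point of (the continuous extension to $\overline{\mathbb B}$ of) $f$ such that the iterates $f^{\odot n}$ converge to the constant $\tau$ uniformly on every compact subset of $\mathbb B$.
   Context: $\mathbb H$ quaternions, $\mathbb S=\{q:q^2=-1\}$, $\mathbb C_I=\mathbb R+I\mathbb R$, $\mathbb B$ open unit ball, $\mathbb B_I=\mathbb B\cap\mathbb C_I$. Slice regular functions on $\mathbb B$ are convergent power series $\sum_nq^na_n$, with $\ast$-product $\big(\sum q^na_n\big)\ast\big(\sum q^nb_n\big)=\sum_nq^n\sum_ka_kb_{n-k}$ and $\ast$-inverse $g^{-\ast}$. $\mathrm{Aut}(\mathbb B)$ is the group of regular bijective self-maps of $\mathbb B$, which are exactly the regular Möbius transformations $q\mapsto(1-q\bar a)^{-\ast}\ast(a-q)u$ with $a\in\mathbb B$, $u\in\partial\mathbb B$. Such a transformation is elliptic if it has exactly one fixed point in $\mathbb B$. Regular composition: $g^{\odot}\varphi=\sum_n\varphi^{\ast n}a_n$ for $g=\sum q^na_n$ and $\varphi:\mathbb B\to\mathbb B$ regular ($\varphi^{\ast0}=1$, $\varphi^{\ast n}=\varphi\ast\varphi^{\ast(n-1)}$). Iterates: $f^{\odot1}=f$, $f^{\odot(n+1)}=f^{\odot}(f^{\odot n})$ (well defined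 regular self-maps of $\mathbb B$ when $f(\mathbb B_I)\subseteq\mathbb B_I$). *)

theory Defs
  imports "HOL-Analysis.Analysis" "HOL-Computational_Algebra.Formal_Power_Series"
begin

codatatype quat = Quat (qre: real) (qi: real) (qj: real) (qk: real)

lemma quat_eq_iff: "x = y \<longleftrightarrow> qre x = qre y \<and> qi x = qi y \<and> qj x = qj y \<and> qk x = qk y"
  by (auto intro: quat.expand)

instantiation quat :: ab_group_add
begin
primcorec zero_quat where "qre 0 = 0" | "qi 0 = 0" | "qj 0 = 0" | "qk 0 = 0"
primcorec plus_quat where
  "qre (x + y) = qre x + qre y" | "qi (x + y) = qi x + qi y"
| "qj (x + y) = qj x + qj y" | "qk (x + y) = qk x + qk y"
primcorec uminus_quat where
  "qre (- x) = - qre x" | "qi (- x) = - qi x" | "qj (- x) = - qj x" | "qk (- x) = - qk x"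
primcorec minus_quat where
  "qre (x - y) = qre x - qre y" | "qi (x - y) = qi x - qi y"
| "qj (x - y) = qj x - qj y" | "qk (x - y) = qk x - qk y"
instance by standard (simp_all add: quat_eq_iff)
end

instantiation quat :: division_ring
begin
primcorec one_quat where "qre 1 = 1" | "qi 1 = 0" | "qj 1 = 0" | "qk 1 = 0"
primcorec times_quat where
  "qre (x * y) = qre x * qre y - qi x * qi y - qj x * qj y - qk x * qk y"
| "qi (x * y) = qre x * qi y + qi x * qre y + qj x * qk y - qk x * qj y"
| "qj (x * y) = qre x * qj y - qi x * qk y + qj x * qre y + qk x * qi y"
| "qk (x * y) = qre x * qk y + qi x * qj y - qj x * qi y + qk x * qre y"
primcorec inverse_quat where
  "qre (inverse x) = qre x / ((qre x)\<^sup>2 + (qi x)\<^sup>2 + (qj x)\<^sup>2 + (qk x)\<^sup>2)"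
| "qi (inverse x) = - qi x / ((qre x)\<^sup>2 + (qi x)\<^sup>2 + (qj x)\<^sup>2 + (qk x)\<^sup>2)"
| "qj (inverse x) = - qj x / ((qre x)\<^sup>2 + (qi x)\<^sup>2 + (qj x)\<^sup>2 + (qk x)\<^sup>2)"
| "qk (inverse x) = - qk x / ((qre x)\<^sup>2 + (qi x)\<^sup>2 + (qj x)\<^sup>2 + (qk x)\<^sup>2)"
definition "x div y = x * inverse y" for x y :: quat

lemma quat_sumsq_pos:
  "x \<noteq> 0 \<Longrightarrow> (qre x)\<^sup>2 + (qi x)\<^sup>2 + (qj x)\<^sup>2 + (qk x)\<^sup>2 \<noteq> (0::real)"
  by (auto simp: quat_eq_iff add_nonneg_eq_0_iff)

lemma quat_inv1: "x \<noteq> 0 \<Longrightarrow> inverse x * x = (1::quat)"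
proof -
  assume "x \<noteq> 0"
  from quat_sumsq_pos[OF this] have d: "(qre x)\<^sup>2 + (qi x)\<^sup>2 + (qj x)\<^sup>2 + (qk x)\<^sup>2 \<noteq> 0" .
  show ?thesis using d
    apply (simp add: quat_eq_iff)
    apply (simp add: divide_simps)
    apply (simp add: power2_eq_square algebra_simps)
    done
qed

lemma quat_inv2: "x \<noteq> 0 \<Longrightarrow> x * inverse x = (1::quat)"
proof -
  assume "x \<noteq> 0"
  from quat_sumsq_pos[OF this] have d: "(qre x)\<^sup>2 + (qi x)\<^sup>2 + (qj x)\<^sup>2 + (qk x)\<^sup>2 \<noteq> 0" .
  show ?thesis using d
    apply (simp add: quat_eq_iff)
    apply (simp add: divide_simps)
    apply (simp add: power2_eq_square algebra_simps)
    done
qed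

instance
  apply (intro_classes; ((rule quat_inv1 quat_inv2, assumption)+)?)
  apply (simp_all add: quat_eq_iff algebra_simps divide_quat_def)
  done
end

instantiation quat :: real_div_algebra
begin
primcorec scaleR_quat where
  "qre (scaleR r x) = r * qre x" | "qi (scaleR r x) = r * qi x"
| "qj (scaleR r x) = r * qj x" | "qk (scaleR r x) = r * qk x"
instance by standard (simp_all add: quat_eq_iff algebra_simps)
end

instantiation quat :: real_normed_div_algebra
begin
definition norm_quat_def: "norm z = norm (qre z, qi z, qj z, qk z)"
definition sgn_quat_def: "sgn x = x /\<^sub>R norm x" for x :: quat
definition dist_quat_def: "dist x y = norm (x - y)" for x y :: quat
definition uniformity_quat_def:
  "(uniformity :: (quat \<times> quat) filter) = (INF e\<in>{0 <..}. principal {(x, y). dist x y < e})"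
definition open_quat_def:
  "open (U :: quat set) \<longleftrightarrow> (\<forall>x\<in>U. eventually (\<lambda>(x', y). x' = x \<longrightarrow> y \<in> U) uniformity)"

lemma norm_quat_explicit:
  "norm z = sqrt ((qre z)\<^sup>2 + (qi z)\<^sup>2 + (qj z)\<^sup>2 + (qk z)\<^sup>2)"
  by (simp add: norm_quat_def norm_Pair add.assoc)

instance
proof
  fix r :: real and x y :: quat
  show "(norm x = 0) = (x = 0)"
    by (auto simp: norm_quat_def quat_eq_iff zero_prod_def)
  have "norm (x + y) = norm ((qre x, qi x, qj x, qk x) + (qre y, qi y, qj y, qk y))"
    by (simp add: norm_quat_def)
  also have "\<dots> \<le> norm x + norm y" unfolding norm_quat_def by (rule norm_triangle_ineq)
  finally show "norm (x + y) \<le> norm x + norm y" .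
  show "norm (scaleR r x) = \<bar>r\<bar> * norm x"
    by (simp add: norm_quat_explicit power_mult_distrib distrib_left [symmetric] real_sqrt_mult)
  show "norm (x * y) = norm x * norm y"
    by (simp add: norm_quat_explicit real_sqrt_mult [symmetric] power2_eq_square algebra_simps)
qed (rule sgn_quat_def dist_quat_def open_quat_def uniformity_quat_def)+
end


definition qcnj :: "quat \<Rightarrow> quat" where
  "qcnj q = Quat (qre q) (- qi q) (- qj q) (- qk q)"

abbreviation qball :: "quat set" where
  "qball \<equiv> ball 0 1"

definition imag_units :: "quat set" where
  "imag_units = {q. q\<^sup>2 = -1}"

definition cslice :: "quat \<Rightarrow> quat set" where
  "cslice I = {of_real x + of_real y * I | x y. True}"

definition bslice :: "quat \<Rightarrow> quat set" where
  "bslice I = qball \<inter> cslice I"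

text \<open>A power series \<Sum> q^n a_n, with coefficients on the right, is represented by the
  formal power series with coefficients a_n.  The formal power series product is exactly
  the \<star>-product, and the formal power series inverse is the \<star>-inverse.\<close>

definition sr_eval :: "quat fps \<Rightarrow> quat \<Rightarrow> quat" where
  "sr_eval F q = (\<Sum>n. q ^ n * fps_nth F n)"

definition slice_regular :: "(quat \<Rightarrow> quat) \<Rightarrow> bool" where
  "slice_regular f \<longleftrightarrow> (\<exists>F. \<forall>q\<in>qball. (\<lambda>n. q ^ n * fps_nth F n) sums f q)"

definition sr_fps :: "(quat \<Rightarrow> quat) \<Rightarrow> quat fps" where
  "sr_fps f = (SOME F. \<forall>q\<in>qball. (\<lambda>n. q ^ n * fps_nth F n) sums f q)"

definition sr_star :: "(quat \<Rightarrow> quat) \<Rightarrow> (quat \<Rightarrow> quat) \<Rightarrow> quat \<Rightarrow> quat" where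
  "sr_star f g = sr_eval (sr_fps f * sr_fps g)"

definition sr_star_pow :: "(quat \<Rightarrow> quat) \<Rightarrow> nat \<Rightarrow> quat \<Rightarrow> quat" where
  "sr_star_pow f n = sr_eval (sr_fps f ^ n)"

definition sr_comp :: "(quat \<Rightarrow> quat) \<Rightarrow> (quat \<Rightarrow> quat) \<Rightarrow> quat \<Rightarrow> quat" where
  "sr_comp g \<phi> = (\<lambda>q. \<Sum>n. sr_star_pow \<phi> n q * fps_nth (sr_fps g) n)"

text \<open>Regular iterates: sr_iter f n = f^{\<odot>(n+1)}, i.e. sr_iter f 0 = f and
  f^{\<odot>(n+2)} = f \<odot> f^{\<odot>(n+1)}.\<close>
primrec sr_iter :: "(quat \<Rightarrow> quat) \<Rightarrow> nat \<Rightarrow> quat \<Rightarrow> quat" where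
  "sr_iter f 0 = f"
| "sr_iter f (Suc n) = sr_comp f (sr_iter f n)"

definition qAut :: "(quat \<Rightarrow> quat) set" where
  "qAut = {f. slice_regular f \<and> bij_betw f qball qball}"

text \<open>Regular Moebius transformation q \<mapsto> (1 - q a\<bar>)^{-\<star>} \<star> (a - q) u, computed on the
  power series level (q corresponds to fps_X).\<close>
definition reg_mobius :: "quat \<Rightarrow> quat \<Rightarrow> quat \<Rightarrow> quat" where
  "reg_mobius a u = sr_eval (inverse (1 - fps_X * fps_const (qcnj a)) *
                              ((fps_const a - fps_X) * fps_const u))"

definition elliptic :: "(quat \<Rightarrow> quat) \<Rightarrow> bool" where
  "elliptic f \<longleftrightarrow> (\<exists>!q. q \<in> qball \<and> f q = q)"

end

theory Submission
  imports Defs "HOL-Complex_Analysis.Complex_Analysis"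
begin

(* Every quaternion is x + yJ for an imaginary unit J, so the ball is swept by the complex
   discs B_J.  The proof reduces the quaternionic dynamics to complex dynamics on one slice:

   1. Representation formula: a power series G with coefficients in C_I, evaluated at
      x + yJ, equals A G(x + yI) + B G(x - yI) with A = (1 - JI)/2, B = (1 + JI)/2.
   2. Reduction: since f is injective and maps B_I into itself, evaluating the Moebius
      series on the real diameter forces a, u into C_I; then f is the slice extension of
      the complex Moebius map g(z) = u (a - z) / (1 - conj a z).
   3. Iterates: by induction on n the regular iterates of f are the slice extensions of
      the iterates of g, hence are given by the representation formula.
   4. f is neither the identity nor elliptic, so g has no fixed point in the disc.
   5. Denjoy-Wolff for such g: in the chart w = 1/(z - t) at a boundary fixed point t, g is
      affine, w |-> mu w + nu with mu > 0; the cases mu = 1, mu > 1, mu < 1 yield a boundary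
      point t to which the iterates of g converge locally uniformly.
   6. By 1 and 3 the iterates of f converge to tau = t_I uniformly on compacta, and absolute
      convergence of the differentiated Moebius series makes f Lipschitz towards tau. *)

text \<open>Needed to pass from absolute to ordinary convergence of quaternionic series.\<close>

instance quat :: banach
proof
  fix X :: "nat \<Rightarrow> quat"
  assume c: "Cauchy X"
  let ?Y = "\<lambda>n. (qre (X n), qi (X n), qj (X n), qk (X n))"
  have d: "dist (?Y m) (?Y n) = dist (X m) (X n)" for m n
    by (simp add: dist_norm dist_quat_def norm_quat_def)
  have "Cauchy ?Y" using c unfolding Cauchy_def d .
  then obtain L where L: "?Y \<longlonglongrightarrow> L" using convergent_eq_Cauchy by blast
  obtain r i j k where Lr: "L = (r, i, j, k)" by (cases L) auto
  let ?l = "Quat r i j k"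
  have dd: "dist (X n) ?l = dist (?Y n) L" for n
    by (simp add: dist_quat_def norm_quat_def Lr dist_norm)
  have "X \<longlonglongrightarrow> ?l"
    using L unfolding tendsto_iff dd by simp
  thus "convergent X" by (auto simp: convergent_def)
qed


definition slice_emb :: "quat \<Rightarrow> complex \<Rightarrow> quat" where
  "slice_emb J z = Re z *\<^sub>R 1 + Im z *\<^sub>R J"

lemma imag_unit_comps:
  assumes "J * J = (-1::quat)"
  shows "qre J = 0" "(qi J)\<^sup>2 + (qj J)\<^sup>2 + (qk J)\<^sup>2 = 1"
proof -
  have e: "qre (J*J) = -1" "qi (J*J) = 0" "qj (J*J) = 0" "qk (J*J) = 0" using assms by simp_all
  hence e1: "(qre J)\<^sup>2 - (qi J)\<^sup>2 - (qj J)\<^sup>2 - (qk J)\<^sup>2 = -1"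
    and e2: "qre J * qi J = 0" "qre J * qj J = 0" "qre J * qk J = 0"
    by (simp_all add: power2_eq_square algebra_simps)
  show r: "qre J = 0"
  proof (rule ccontr)
    assume "qre J \<noteq> 0"
    with e2 have "qi J = 0" "qj J = 0" "qk J = 0" by auto
    with e1 have "(qre J)\<^sup>2 = -1" by simp
    moreover have "(qre J)\<^sup>2 \<ge> 0" by simp
    ultimately show False by linarith
  qed
  show "(qi J)\<^sup>2 + (qj J)\<^sup>2 + (qk J)\<^sup>2 = 1" using e1 r by simp
qed

lemma norm_imag_unit: "J * J = (-1::quat) \<Longrightarrow> norm J = 1"
  using imag_unit_comps[of J] by (simp add: norm_quat_explicit add.assoc)

lemma slice_emb_comps:
  "qre (slice_emb J z) = Re z + Im z * qre J" "qi (slice_emb J z) = Im z * qi J"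
  "qj (slice_emb J z) = Im z * qj J" "qk (slice_emb J z) = Im z * qk J"
  by (simp_all add: slice_emb_def)

lemma slice_emb_add: "slice_emb J (z + w) = slice_emb J z + slice_emb J w"
  by (simp add: slice_emb_def algebra_simps scaleR_left_distrib)
lemma slice_emb_diff: "slice_emb J (z - w) = slice_emb J z - slice_emb J w"
  by (simp add: slice_emb_def algebra_simps scaleR_left_diff_distrib)
lemma slice_emb_uminus: "slice_emb J (- z) = - slice_emb J z"
  by (simp add: slice_emb_def algebra_simps)
lemma slice_emb_zero[simp]: "slice_emb J 0 = 0" by (simp add: slice_emb_def)
lemma slice_emb_one[simp]: "slice_emb J 1 = 1" by (simp add: slice_emb_def)
lemma slice_emb_ii[simp]: "slice_emb J \<i> = J" by (simp add: slice_emb_def)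
lemma slice_emb_scaleR: "slice_emb J (r *\<^sub>R z) = r *\<^sub>R slice_emb J z"
  by (simp add: slice_emb_def algebra_simps)

lemma slice_emb_mult:
  assumes "J * J = (-1::quat)"
  shows "slice_emb J (z * w) = slice_emb J z * slice_emb J w"
proof -
  have "slice_emb J z * slice_emb J w = (Re z * Re w) *\<^sub>R 1 + (Re z * Im w + Im z * Re w) *\<^sub>R J + (Im z * Im w) *\<^sub>R (J*J)"
    by (simp add: slice_emb_def algebra_simps scaleR_left_distrib)
  also have "\<dots> = slice_emb J (z * w)" using assms
    by (simp add: slice_emb_def algebra_simps scaleR_left_distrib scaleR_left_diff_distrib)
  finally show ?thesis by simp
qed

lemma slice_emb_power:
  assumes "J * J = (-1::quat)"
  shows "slice_emb J (z ^ n) = slice_emb J z ^ n"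
  by (induction n) (simp_all add: slice_emb_mult[OF assms])

lemma norm_slice_emb:
  assumes "J * J = (-1::quat)"
  shows "norm (slice_emb J z) = norm z"
proof -
  note c = imag_unit_comps[OF assms]
  have "(qre (slice_emb J z))\<^sup>2 + (qi (slice_emb J z))\<^sup>2 + (qj (slice_emb J z))\<^sup>2 + (qk (slice_emb J z))\<^sup>2
      = (Re z)\<^sup>2 + (Im z)\<^sup>2 * ((qi J)\<^sup>2 + (qj J)\<^sup>2 + (qk J)\<^sup>2)"
    by (simp add: slice_emb_comps c power_mult_distrib algebra_simps)
  also have "\<dots> = (Re z)\<^sup>2 + (Im z)\<^sup>2" using c by simp
  finally show ?thesis by (simp add: norm_quat_explicit cmod_def)
qed

lemma slice_emb_inj:
  assumes "J * J = (-1::quat)" "slice_emb J z = slice_emb J w" shows "z = w"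
proof -
  have "norm (slice_emb J (z - w)) = 0" using assms(2) by (simp add: slice_emb_diff)
  thus ?thesis using norm_slice_emb[OF assms(1)] by simp
qed

lemma slice_emb_inverse:
  assumes "J * J = (-1::quat)"
  shows "slice_emb J (inverse z) = inverse (slice_emb J z)"
proof (cases "z = 0")
  case False
  have "slice_emb J z * slice_emb J (inverse z) = 1" using False by (simp add: slice_emb_mult[OF assms, symmetric])
  thus ?thesis by (metis inverse_unique)
qed simp

lemma slice_emb_divide:
  assumes "J * J = (-1::quat)"
  shows "slice_emb J (z / w) = slice_emb J z * inverse (slice_emb J w)"
  by (simp add: divide_inverse slice_emb_mult[OF assms] slice_emb_inverse[OF assms])

lemma bounded_linear_slice_emb: "bounded_linear (slice_emb J)"
  unfolding slice_emb_def
  by (intro bounded_linear_add bounded_linear_compose[OF bounded_linear_scaleR_left bounded_linear_Re]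
      bounded_linear_compose[OF bounded_linear_scaleR_left bounded_linear_Im])

lemma qcnj_slice_emb:
  assumes "J * J = (-1::quat)"
  shows "qcnj (slice_emb J z) = slice_emb J (cnj z)"
  using imag_unit_comps[OF assms] by (simp add: quat_eq_iff qcnj_def slice_emb_comps)

text \<open>Every quaternion q lies in a slice: q = qre q + r J with r the norm of the imaginary
  part of q and J its normalisation (any J if the imaginary part vanishes).\<close>

lemma quat_slice_decomp:
  fixes q :: quat
  shows "\<exists>J z. J * J = -1 \<and> q = slice_emb J z"
proof -
  let ?v = "Quat 0 (qi q) (qj q) (qk q)"
  let ?r = "norm ?v"
  show ?thesis
  proof (cases "?r = 0")
    case True
    hence v: "qi q = 0" "qj q = 0" "qk q = 0" by (auto simp: quat_eq_iff)
    let ?J = "Quat 0 1 0 0"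
    have "?J * ?J = -1" by (simp add: quat_eq_iff)
    moreover have "q = slice_emb ?J (of_real (qre q))" using v by (simp add: quat_eq_iff slice_emb_comps of_real_def)
    ultimately show ?thesis by (intro exI[of _ ?J] exI[of _ "of_real (qre q)"]) simp
  next
    case False
    hence rp: "?r > 0" by simp
    let ?J = "(1 / ?r) *\<^sub>R ?v"
    have r2: "?r\<^sup>2 = (qi q)\<^sup>2 + (qj q)\<^sup>2 + (qk q)\<^sup>2" by (simp add: norm_quat_explicit)
    have sp: "qi q * qi q + (qj q * qj q + qk q * qk q) > 0"
    proof -
      have "?r * ?r > 0" using rp by simp
      thus ?thesis using r2 by (simp add: power2_eq_square add.assoc)
    qed
    have "?J * ?J = -1"
      using rp r2 sp by (simp add: quat_eq_iff power2_eq_square field_simps)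
    moreover have "q = slice_emb ?J (Complex (qre q) ?r)" using rp by (simp add: quat_eq_iff slice_emb_comps)
    ultimately show ?thesis by (intro exI[of _ ?J] exI[of _ "Complex (qre q) ?r"]) simp
  qed
qed

lemma ball_slice_decomp:
  assumes "q \<in> qball"
  obtains J z where "J * J = -1" "q = slice_emb J z" "norm z < 1"
  using quat_slice_decomp[of q] assms norm_slice_emb by fastforce

lemma cslice_slice_emb: "x \<in> cslice I \<Longrightarrow> \<exists>w. x = slice_emb I w"
proof -
  assume "x \<in> cslice I"
  then obtain r s where "x = of_real r + of_real s * I" by (auto simp: cslice_def)
  hence "x = slice_emb I (Complex r s)" by (simp add: slice_emb_def scaleR_conv_of_real)
  thus ?thesis by blast
qed

lemma slice_emb_sum: "slice_emb J (sum f A) = (\<Sum>x\<in>A. slice_emb J (f x))"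
  by (induction A rule: infinite_finite_induct) (simp_all add: slice_emb_add)

lemma qcnj_qcnj: "qcnj (qcnj x) = x" by (simp add: qcnj_def quat_eq_iff)
lemma norm_qcnj: "norm (qcnj x) = norm x" by (simp add: qcnj_def norm_quat_explicit)

section \<open>The representation formula\<close>

text \<open>For imaginary units I, J the quaternions repA J I = (1 - JI)/2 and repB J I = (1 + JI)/2
  satisfy repA J I (x + yI) + repB J I (x - yI) = x + yJ.  This expresses values of a
  slice function at x + yJ through its values at x + yI and x - yI.\<close>

definition repA :: "quat \<Rightarrow> quat \<Rightarrow> quat" where "repA J I = (1/2) *\<^sub>R (1 - J * I)"
definition repB :: "quat \<Rightarrow> quat \<Rightarrow> quat" where "repB J I = (1/2) *\<^sub>R (1 + J * I)"

lemma half_double: "(1/2::real) *\<^sub>R (x + x) = (x::'a::real_vector)"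
  by (simp flip: scaleR_2)

lemma repA_repB_sum: "repA J I + repB J I = 1"
proof -
  have "repA J I + repB J I = (1/2) *\<^sub>R ((1 - J * I) + (1 + J * I))"
    unfolding repA_def repB_def by (rule scaleR_right_distrib[symmetric])
  also have "(1 - J * I) + (1 + J * I) = (1 + 1::quat)" by simp
  finally show ?thesis by (simp only: half_double)
qed

lemma repAB_combine: "repA J I * x + repB J I * x = x"
  by (simp add: distrib_right[symmetric] repA_repB_sum)

lemma repAB_lin: "repA J I * x + repB J I * y = (1/2) *\<^sub>R ((x + y) - (J * I) * (x - y))"
  by (simp add: repA_def repB_def algebra_simps)

lemma repAB_rep:
  assumes I: "I * I = (-1::quat)"
  shows "repA J I * slice_emb I w + repB J I * slice_emb I (cnj w) = slice_emb J w"
proof -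
  have "repA J I * slice_emb I w + repB J I * slice_emb I (cnj w)
      = Re w *\<^sub>R (repA J I + repB J I) + Im w *\<^sub>R ((repA J I - repB J I) * I)"
    by (simp add: slice_emb_def algebra_simps)
  also have "repA J I - repB J I = - (J * I)"
  proof -
    have "repA J I - repB J I = (1/2) *\<^sub>R ((1 - J * I) - (1 + J * I))"
      unfolding repA_def repB_def by (rule scaleR_right_diff_distrib[symmetric])
    also have "(1 - J * I) - (1 + J * I) = - (J * I) + - (J * I)" by simp
    finally show ?thesis by (simp only: half_double)
  qed
  also have "- (J * I) * I = J" by (simp add: mult.assoc I)
  finally show ?thesis by (simp add: repA_repB_sum slice_emb_def)
qed

lemma repA_I: assumes "I * I = (-1::quat)" shows "repA I I = 1"
proof -
  have "1 - I * I = (1 + 1::quat)" using assms by simp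
  thus ?thesis unfolding repA_def by (simp only: half_double)
qed

lemma repB_I: "I * I = (-1::quat) \<Longrightarrow> repB I I = 0" by (simp add: repB_def)

lemma norm_repA: assumes "I * I = (-1::quat)" "J * J = -1" shows "norm (repA J I) \<le> 1"
proof -
  have "norm (1 - J * I) \<le> norm (1::quat) + norm (J * I)" by (rule norm_triangle_ineq4)
  also have "\<dots> = 2" using norm_imag_unit[OF assms(1)] norm_imag_unit[OF assms(2)] by (simp add: norm_mult)
  finally show ?thesis by (simp add: repA_def)
qed

lemma norm_repB: assumes "I * I = (-1::quat)" "J * J = -1" shows "norm (repB J I) \<le> 1"
proof -
  have "norm (1 + J * I) \<le> norm (1::quat) + norm (J * I)" by (rule norm_triangle_ineq)
  also have "\<dots> = 2" using norm_imag_unit[OF assms(1)] norm_imag_unit[OF assms(2)] by (simp add: norm_mult)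
  finally show ?thesis by (simp add: repB_def)
qed

lemma slice_pair_sums:
  assumes I: "I * I = (-1::quat)"
    and s1: "(\<lambda>k. fps_nth G k * w1 ^ k) sums S1" and s2: "(\<lambda>k. fps_nth G k * w2 ^ k) sums S2"
  shows "(\<lambda>k. (A * slice_emb I (w1 ^ k) + B * slice_emb I (w2 ^ k)) * slice_emb I (fps_nth G k))
           sums (A * slice_emb I S1 + B * slice_emb I S2)"
proof -
  have t1: "(\<lambda>n. slice_emb I (fps_nth G n * w1 ^ n)) sums slice_emb I S1"
    by (rule bounded_linear.sums[OF bounded_linear_slice_emb s1])
  have t2: "(\<lambda>n. slice_emb I (fps_nth G n * w2 ^ n)) sums slice_emb I S2"
    by (rule bounded_linear.sums[OF bounded_linear_slice_emb s2])
  have s: "(\<lambda>n. A * slice_emb I (fps_nth G n * w1 ^ n) + B * slice_emb I (fps_nth G n * w2 ^ n))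
       sums (A * slice_emb I S1 + B * slice_emb I S2)"
    by (intro sums_add sums_mult t1 t2)
  have e: "(A * slice_emb I (w1 ^ k) + B * slice_emb I (w2 ^ k)) * slice_emb I (fps_nth G k) =
        A * slice_emb I (fps_nth G k * w1 ^ k) + B * slice_emb I (fps_nth G k * w2 ^ k)" for k
    by (simp add: distrib_right mult.assoc slice_emb_mult[OF I, symmetric] mult.commute)
  show ?thesis using s unfolding e[symmetric] .
qed

lemma rep_sums:
  assumes I: "I * I = (-1::quat)" and J: "J * J = -1"
    and G: "fps_conv_radius G \<ge> 1" and z: "norm z < 1"
  shows "(\<lambda>n. slice_emb J z ^ n * slice_emb I (fps_nth G n)) sums
           (repA J I * slice_emb I (eval_fps G z) + repB J I * slice_emb I (eval_fps G (cnj z)))"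
proof -
  have r1: "ereal (norm z) < fps_conv_radius G" using z G
    by (meson ereal_less(3) less_le_trans one_ereal_def)
  have r2: "ereal (norm (cnj z)) < fps_conv_radius G" using r1 by simp
  have pow: "slice_emb J z ^ n = repA J I * slice_emb I (z ^ n) + repB J I * slice_emb I (cnj z ^ n)" for n
    using repAB_rep[OF I, of J "z ^ n"] by (simp add: slice_emb_power[OF J])
  show ?thesis
    unfolding pow by (rule slice_pair_sums[OF I sums_eval_fps[OF r1] sums_eval_fps[OF r2]])
qed

definition slice_fps :: "quat \<Rightarrow> complex fps \<Rightarrow> quat fps" where
  "slice_fps J G = Abs_fps (\<lambda>n. slice_emb J (fps_nth G n))"

lemma slice_fps_nth[simp]: "fps_nth (slice_fps J G) n = slice_emb J (fps_nth G n)" by (simp add: slice_fps_def)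

lemma slice_fps_mult: assumes "J * J = (-1::quat)" shows "slice_fps J (F * G) = slice_fps J F * slice_fps J G"
  by (rule fps_ext) (simp add: fps_mult_nth slice_emb_sum slice_emb_mult[OF assms])

lemma slice_fps_one: "slice_fps J 1 = 1"
  by (rule fps_ext) (simp add: fps_one_nth)

lemma slice_fps_power: assumes "J * J = (-1::quat)" shows "slice_fps J (F ^ n) = slice_fps J F ^ n"
  by (induction n) (simp_all add: slice_fps_one slice_fps_mult[OF assms])

text \<open>Identity theorem for real power series, obtained from the complex one by analytic
  continuation from the segment (0, 1), which accumulates at 0.\<close>

lemma zero_islimpt_unit_segment: "(0::complex) islimpt complex_of_real ` {0<..<1}"
proof (rule islimpt_approachable[THEN iffD2], intro allI impI)
  fix e :: real assume e: "e > 0"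
  let ?x = "complex_of_real (min (e/2) (1/2))"
  have "?x \<in> complex_of_real ` {0<..<1}" using e by auto
  moreover have "?x \<noteq> 0" using e by simp
  moreover have "dist ?x 0 < e" using e by simp
  ultimately show "\<exists>x'\<in>complex_of_real ` {0<..<1}. x' \<noteq> 0 \<and> dist x' 0 < e" by blast
qed

lemma fps_zero_on_unit_segment:
  fixes D :: "complex fps"
  assumes conv: "fps_conv_radius D \<ge> 1" and zero: "\<And>t. 0 < t \<Longrightarrow> t < 1 \<Longrightarrow> eval_fps D (of_real t) = 0"
  shows "D = 0"
proof (rule eval_fps_eqD)
  have hol: "eval_fps D holomorphic_on ball 0 1"
  proof -
    have "ball 0 1 \<subseteq> eball 0 (fps_conv_radius D)"
      using conv by (intro ball_eball_mono) (simp add: one_ereal_def)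
    thus ?thesis by (rule holomorphic_on_eval_fps)
  qed
  have z: "eval_fps D w = 0" if "w \<in> ball 0 1" for w
  proof (rule analytic_continuation[OF hol _ _ _ _ zero_islimpt_unit_segment _ that])
    show "open (ball (0::complex) 1)" "connected (ball (0::complex) 1)" by simp_all
    show "complex_of_real ` {0<..<1} \<subseteq> ball 0 1" by auto
    show "(0::complex) \<in> ball 0 1" by simp
  qed (use zero in auto)
  have "(0::ereal) < 1" by simp
  thus "fps_conv_radius D > 0" using conv by (rule less_le_trans)
  show "fps_conv_radius (0::complex fps) > 0" by simp
  have "eventually (\<lambda>w. w \<in> ball (0::complex) 1) (nhds 0)" by (intro eventually_nhds_in_open) auto
  thus "eventually (\<lambda>w. eval_fps D w = eval_fps 0 w) (nhds 0)"
    by eventually_elim (simp add: z)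
qed

lemma real_powser_zero:
  fixes d :: "nat \<Rightarrow> real"
  assumes s: "\<And>t. \<bar>t\<bar> < 1 \<Longrightarrow> (\<lambda>n. t ^ n * d n) sums 0"
  shows "d n = 0"
proof -
  define D where "D = Abs_fps (\<lambda>n. complex_of_real (d n))"
  have sc: "(\<lambda>n. fps_nth D n * of_real t ^ n) sums 0" if "\<bar>t\<bar> < 1" for t
  proof -
    have "(\<lambda>n. complex_of_real (t ^ n * d n)) sums of_real 0"
      by (rule bounded_linear.sums[OF bounded_linear_of_real s[OF that]])
    thus ?thesis by (simp add: D_def mult.commute)
  qed
  have conv: "fps_conv_radius D \<ge> 1" unfolding fps_conv_radius_def
  proof (rule conv_radius_geI_ex')
    fix r :: real assume "0 < r" "ereal r < 1"
    hence "\<bar>r\<bar> < 1" by simp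
    from sc[OF this] show "summable (\<lambda>n. fps_nth D n * of_real r ^ n)" by (simp add: sums_iff)
  qed
  have "D = 0"
    by (rule fps_zero_on_unit_segment[OF conv]) (use sc in \<open>simp add: eval_fps_def sums_iff\<close>)
  hence "fps_nth D n = 0" by simp
  thus ?thesis by (simp add: D_def)
qed

text \<open>Hence a function on the quaternionic ball has at most one power series expansion:
  test the difference of two expansions on the real diameter, component by component.\<close>

lemma abs_comp_le:
  "\<bar>qre x\<bar> \<le> norm x" "\<bar>qi x\<bar> \<le> norm x" "\<bar>qj x\<bar> \<le> norm x" "\<bar>qk x\<bar> \<le> norm x"
  unfolding norm_quat_explicit by (intro real_le_rsqrt; simp)+

lemma bl_qre: "bounded_linear qre"
  by (rule bounded_linear_intro[where K=1]) (simp_all add: abs_comp_le)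
lemma bl_qi: "bounded_linear qi"
  by (rule bounded_linear_intro[where K=1]) (simp_all add: abs_comp_le)
lemma bl_qj: "bounded_linear qj"
  by (rule bounded_linear_intro[where K=1]) (simp_all add: abs_comp_le)
lemma bl_qk: "bounded_linear qk"
  by (rule bounded_linear_intro[where K=1]) (simp_all add: abs_comp_le)

lemma quat_powser_unique:
  assumes F: "\<forall>q\<in>qball. (\<lambda>n. q ^ n * fps_nth F n) sums h q"
      and G: "\<forall>q\<in>qball. (\<lambda>n. q ^ n * fps_nth G n) sums h q"
  shows "F = G"
proof -
  have s: "(\<lambda>n. (of_real t :: quat) ^ n * (fps_nth F n - fps_nth G n)) sums 0" if "\<bar>t\<bar> < 1" for t
  proof -
    have "(of_real t :: quat) \<in> qball" using that by simp
    from sums_diff[OF F[rule_format, OF this] G[rule_format, OF this]]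
    show ?thesis by (simp add: right_diff_distrib)
  qed
  have e: "(of_real t :: quat) ^ n * x = (t ^ n) *\<^sub>R x" for t n x
    by (simp add: scaleR_conv_of_real)
  have comp: "p (fps_nth F n - fps_nth G n) = 0"
    if bl: "bounded_linear p" and ps: "\<And>r x. p (r *\<^sub>R x) = r * p x" for p :: "quat \<Rightarrow> real" and n
  proof (rule real_powser_zero[of "\<lambda>n. p (fps_nth F n - fps_nth G n)"])
    fix t :: real assume "\<bar>t\<bar> < 1"
    from bounded_linear.sums[OF bl s[OF this]]
    show "(\<lambda>n. t ^ n * p (fps_nth F n - fps_nth G n)) sums 0"
      by (simp add: e ps linear_simps(3)[OF bl])
  qed
  show ?thesis
  proof (rule fps_ext)
    fix n
    have "qre (fps_nth F n - fps_nth G n) = 0" by (rule comp[OF bl_qre]) simp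
    moreover have "qi (fps_nth F n - fps_nth G n) = 0" by (rule comp[OF bl_qi]) simp
    moreover have "qj (fps_nth F n - fps_nth G n) = 0" by (rule comp[OF bl_qj]) simp
    moreover have "qk (fps_nth F n - fps_nth G n) = 0" by (rule comp[OF bl_qk]) simp
    ultimately show "fps_nth F n = fps_nth G n" by (simp add: quat_eq_iff)
  qed
qed

lemma sr_fps_eq:
  assumes "\<forall>q\<in>qball. (\<lambda>k. q ^ k * slice_emb I (fps_nth H k)) sums h q"
  shows "sr_fps h = slice_fps I H"
proof -
  let ?P = "\<lambda>F. \<forall>q\<in>qball. (\<lambda>n. q ^ n * fps_nth F n) sums h q"
  have pH: "?P (slice_fps I H)" using assms by simp
  hence "?P (SOME F. ?P F)" by (rule someI)
  hence "(SOME F. ?P F) = slice_fps I H" using pH by (rule quat_powser_unique)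
  thus ?thesis by (simp add: sr_fps_def)
qed

text \<open>The series of (1 - q conj a)^{-star} star (a - q) u has n-th coefficient
  conj(a)^n a u - conj(a)^(n-1) u (the second term absent for n = 0).  We treat these
  coefficients over an arbitrary ring, with c in place of conj a.\<close>

definition mob_coeff :: "'a::ring_1 \<Rightarrow> 'a \<Rightarrow> 'a \<Rightarrow> nat \<Rightarrow> 'a" where
  "mob_coeff c a u n = c ^ n * a * u - (if n = 0 then 0 else c ^ (n - 1) * u)"

lemma fps_gp_inverse:
  "inverse (1 - fps_X * fps_const (c::'a::division_ring)) = Abs_fps (\<lambda>n. c ^ n)"
proof (rule fps_inverse_unique)
  show "(1 - fps_X * fps_const c) * Abs_fps (\<lambda>n. c ^ n) = 1"
  proof (rule fps_ext)
    fix n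
    show "fps_nth ((1 - fps_X * fps_const c) * Abs_fps (\<lambda>n. c ^ n)) n = fps_nth 1 n"
      by (cases n) (simp_all add: algebra_simps mult.assoc power_commutes)
  qed
qed

lemma fps_reg_mobius:
  fixes c a u :: "'a::division_ring"
  shows   "inverse (1 - fps_X * fps_const c) * ((fps_const a - fps_X) * fps_const u)
     = Abs_fps (mob_coeff c a u)"
proof -
  have "(fps_const a - fps_X) * fps_const u = fps_const (a * u) - fps_X * fps_const u"
    by (simp add: algebra_simps)
  hence "inverse (1 - fps_X * fps_const c) * ((fps_const a - fps_X) * fps_const u)
     = Abs_fps (\<lambda>n. c ^ n) * fps_const (a * u) - Abs_fps (\<lambda>n. c ^ n) * (fps_X * fps_const u)"
    unfolding fps_gp_inverse by (simp add: right_diff_distrib)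
  also have "\<dots> = Abs_fps (mob_coeff c a u)"
    by (rule fps_ext) (simp add: mob_coeff_def mult.assoc[symmetric])
  finally show ?thesis .
qed

text \<open>Telescoping: wherever the Moebius series converges at a point x commuting with c, its
  sum S solves (1 - x c) S = (a - x) u.\<close>

lemma mob_coeff_telescope:
  fixes x c a u S :: "'a::real_normed_algebra_1"
  assumes s: "(\<lambda>n. x ^ n * mob_coeff c a u n) sums S" and xc: "x * c = c * x"
  shows "S - x * c * S = a * u - x * u"
proof -
  have s1: "(\<lambda>n. x ^ Suc n * mob_coeff c a u (Suc n)) sums (S - a * u)"
    using s by (subst sums_Suc_iff) (simp add: mob_coeff_def)
  have s2: "(\<lambda>n. x * c * (x ^ n * mob_coeff c a u n)) sums (x * c * S)"
    by (rule sums_mult[OF s])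
  have cp: "c * x ^ n = x ^ n * c" for n
    by (rule power_commuting_commutes[OF xc, symmetric])
  have e: "x ^ Suc n * mob_coeff c a u (Suc n) - x * c * (x ^ n * mob_coeff c a u n)
      = (if n = 0 then - (x * u) else 0)" for n
  proof -
    have "x * c * (x ^ n * mob_coeff c a u n) = x ^ Suc n * (c * mob_coeff c a u n)"
      by (metis cp mult.assoc power_Suc)
    moreover have "c * mob_coeff c a u n = (if n = 0 then c * a * u else mob_coeff c a u (Suc n))"
      by (cases n) (simp_all add: mob_coeff_def algebra_simps mult.assoc)
    ultimately show ?thesis
    proof (cases n)
      case 0 thus ?thesis by (simp add: mob_coeff_def algebra_simps)
    qed simp
  qed
  have "(\<lambda>n. x ^ Suc n * mob_coeff c a u (Suc n) - x * c * (x ^ n * mob_coeff c a u n))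
      sums (S - a * u - x * c * S)" by (rule sums_diff[OF s1 s2])
  also have "(\<lambda>n. x ^ Suc n * mob_coeff c a u (Suc n) - x * c * (x ^ n * mob_coeff c a u n))
        = (\<lambda>n. if n = 0 then - (x * u) else 0)" using e by auto
  finally have "(\<lambda>n. if n = 0 then - (x * u) else 0) sums (S - a * u - x * c * S)" .
  moreover have "(\<lambda>n::nat. if n = 0 then - (x * u) else 0) sums (- (x * u))"
    using sums_single[of 0 "\<lambda>_. - (x * u)"] by simp
  ultimately have "S - a * u - x * c * S = - (x * u)" using sums_unique2 by blast
  thus ?thesis by (simp add: algebra_simps)
qed

lemma mob_coeff_norm_Suc:
  fixes c a u :: "'a::real_normed_div_algebra"
  assumes "norm c \<le> 1" "norm a \<le> 1" "norm u = 1"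
  shows "norm (mob_coeff c a u (Suc n)) \<le> 2 * norm c ^ n"
proof -
  have "norm (mob_coeff c a u (Suc n)) \<le> norm (c ^ Suc n * a * u) + norm (c ^ n * u)"
    by (simp add: mob_coeff_def norm_triangle_ineq4)
  also have "norm (c ^ Suc n * a * u) = norm c ^ n * (norm c * norm a)"
    using assms by (simp add: norm_mult norm_power)
  also have "\<dots> \<le> norm c ^ n"
    using assms by (intro mult_right_le_one_le) (simp_all add: mult_le_one)
  finally show ?thesis using assms by (simp add: norm_mult norm_power)
qed

lemma mob_coeff_norm_le:
  fixes c a u :: "'a::real_normed_div_algebra"
  assumes "norm c \<le> 1" "norm a \<le> 1" "norm u = 1"
  shows "norm (mob_coeff c a u n) \<le> 2"
proof (cases n)
  case 0 thus ?thesis using assms by (simp add: mob_coeff_def norm_mult)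
next
  case (Suc m)
  have "2 * norm c ^ m \<le> 2" using assms by (simp add: power_le_one)
  thus ?thesis using mob_coeff_norm_Suc[OF assms, of m] unfolding Suc by linarith
qed

lemma mob_coeff_summable:
  fixes c a u x :: "'a::{real_normed_div_algebra, banach}"
  assumes "norm c \<le> 1" "norm a \<le> 1" "norm u = 1" "norm x < 1"
  shows "summable (\<lambda>n. x ^ n * mob_coeff c a u n)"
proof (rule summable_norm_cancel, rule summable_comparison_test)
  show "\<exists>N. \<forall>n\<ge>N. norm (norm (x ^ n * mob_coeff c a u n)) \<le> 2 * norm x ^ n"
  proof (intro exI allI impI)
    fix n :: nat
    have "norm (x ^ n * mob_coeff c a u n) = norm x ^ n * norm (mob_coeff c a u n)"
      by (simp add: norm_mult norm_power)
    also have "\<dots> \<le> norm x ^ n * 2" by (rule mult_left_mono[OF mob_coeff_norm_le[OF assms(1-3)]]) simp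
    finally show "norm (norm (x ^ n * mob_coeff c a u n)) \<le> 2 * norm x ^ n" by (simp add: mult.commute)
  qed
  show "summable (\<lambda>n. 2 * norm x ^ n)" using assms(4) by (intro summable_mult summable_geometric) simp
qed

lemma reg_mobius_telescope:
  assumes a: "norm a < 1" and u: "norm u = 1" and x: "norm x < 1" and xc: "x * qcnj a = qcnj a * x"
  shows "reg_mobius a u x - x * qcnj a * reg_mobius a u x = a * u - x * u"
proof (rule mob_coeff_telescope[OF _ xc])
  have "summable (\<lambda>n. x ^ n * mob_coeff (qcnj a) a u n)"
    by (rule mob_coeff_summable) (use a u x in \<open>simp_all add: norm_qcnj\<close>)
  thus "(\<lambda>n. x ^ n * mob_coeff (qcnj a) a u n) sums reg_mobius a u x"
    by (simp add: reg_mobius_def fps_reg_mobius sr_eval_def summable_sums)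
qed

lemma slice_emb_mob_coeff:
  assumes I: "I * I = (-1::quat)"
  shows "slice_emb I (mob_coeff c a u n) = mob_coeff (slice_emb I c) (slice_emb I a) (slice_emb I u) n"
  by (simp add: mob_coeff_def slice_emb_diff slice_emb_mult[OF I] slice_emb_power[OF I])

definition cmob :: "complex \<Rightarrow> complex \<Rightarrow> complex \<Rightarrow> complex" where
  "cmob a u z = u * (a - z) / (1 - cnj a * z)"

text \<open>The denominator does not vanish on the closed disc, and
  |1 - conj a z|^2 - |a - z|^2 = (1 - |a|^2)(1 - |z|^2) shows that g maps the disc into itself.\<close>

lemma norm_sq_complex: "(complex_of_real (norm w))\<^sup>2 = w * cnj w"
  using complex_norm_square[of w] by simp

lemma cmob_denom_nz: "norm a < 1 \<Longrightarrow> norm z \<le> 1 \<Longrightarrow> 1 - cnj a * z \<noteq> 0"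
proof
  assume "norm a < 1" "norm z \<le> 1" "1 - cnj a * z = 0"
  hence "cnj a * z = 1" by simp
  hence "norm a * norm z = 1" by (metis complex_mod_cnj norm_mult norm_one)
  moreover have "norm a * norm z < 1" using \<open>norm a < 1\<close> \<open>norm z \<le> 1\<close>
    by (metis mult_le_one norm_ge_zero not_le order.strict_iff_order mult_strict_right_mono mult.commute
        less_le_trans mult_left_le_one_le)
  ultimately show False by simp
qed

lemma cmob_key_identity:
  "complex_of_real ((norm (1 - cnj a * z))\<^sup>2 - (norm (a - z))\<^sup>2)
     = complex_of_real ((1 - (norm a)\<^sup>2) * (1 - (norm z)\<^sup>2))"
  by (simp add: norm_sq_complex algebra_simps)

lemma cmob_disc:
  assumes a: "norm a < 1" and u: "norm u = 1" and z: "norm z < 1"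
  shows "norm (cmob a u z) < 1"
proof -
  have d: "1 - cnj a * z \<noteq> 0" using cmob_denom_nz a z by simp
  have "(norm (1 - cnj a * z))\<^sup>2 - (norm (a - z))\<^sup>2 = (1 - (norm a)\<^sup>2) * (1 - (norm z)\<^sup>2)"
    using cmob_key_identity[of a z] of_real_eq_iff by blast
  moreover have "(1 - (norm a)\<^sup>2) * (1 - (norm z)\<^sup>2) > 0"
    using a z by (intro mult_pos_pos) (simp_all add: power_less_one_iff abs_square_less_1)
  ultimately have "(norm (a - z))\<^sup>2 < (norm (1 - cnj a * z))\<^sup>2" by simp
  hence "norm (a - z) < norm (1 - cnj a * z)" using power2_less_imp_less by fastforce
  thus ?thesis using d u by (simp add: cmob_def norm_mult norm_divide divide_less_eq)
qed

lemma cmob_holo: "norm a < 1 \<Longrightarrow> cmob a u holomorphic_on ball 0 1"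
  unfolding cmob_def using cmob_denom_nz[of a] by (intro holomorphic_intros) auto

lemma cmob_iter_disc:
  assumes "norm a < 1" "norm u = 1" "norm z < 1"
  shows "norm ((cmob a u ^^ n) z) < 1"
  using assms by (induction n) (simp_all add: cmob_disc)

lemma cmob_iter_holo:
  assumes "norm a < 1" "norm u = 1"
  shows "(cmob a u ^^ n) holomorphic_on ball 0 1"
proof (induction n)
  case 0 show ?case by (simp add: holomorphic_on_id id_def)
next
  case (Suc n)
  have "(cmob a u \<circ> (cmob a u ^^ n)) holomorphic_on ball 0 1"
    by (rule holomorphic_on_compose_gen[OF Suc cmob_holo[OF assms(1)]])
       (use cmob_iter_disc[OF assms] in auto)
  thus ?case by (simp add: o_def)
qed

text \<open>Fixed points of g off the pole are the roots of a quadratic polynomial; when a is not 0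
  the product of its roots has modulus 1.\<close>

definition cmob_fixpoly :: "complex \<Rightarrow> complex \<Rightarrow> complex \<Rightarrow> complex" where
  "cmob_fixpoly a u z = cnj a * z\<^sup>2 - (1 + u) * z + a * u"

lemma cmob_fix_iff:
  assumes "1 - cnj a * z \<noteq> 0"
  shows "cmob a u z = z \<longleftrightarrow> cmob_fixpoly a u z = 0"
proof -
  have "cmob a u z = z \<longleftrightarrow> u * (a - z) = z * (1 - cnj a * z)"
    using assms by (simp add: cmob_def divide_eq_eq)
  also have "\<dots> \<longleftrightarrow> cmob_fixpoly a u z = 0"
    by (simp add: cmob_fixpoly_def power2_eq_square algebra_simps)
  finally show ?thesis .
qed

lemma cmob_fixpoly_roots:
  assumes "a \<noteq> 0"
  shows "\<exists>z1 z2. (\<forall>z. cmob_fixpoly a u z = cnj a * (z - z1) * (z - z2)) \<and> z1 * z2 = a * u / cnj a"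
proof -
  define s where "s = csqrt ((1 + u)\<^sup>2 - 4 * cnj a * a * u)"
  have s2: "s\<^sup>2 = (1 + u)\<^sup>2 - 4 * cnj a * a * u" by (simp add: s_def)
  define z1 where "z1 = ((1 + u) + s) / (2 * cnj a)"
  define z2 where "z2 = ((1 + u) - s) / (2 * cnj a)"
  have ca: "cnj a \<noteq> 0" using assms by simp
  have p: "z1 * z2 = a * u / cnj a"
  proof -
    have "z1 * z2 = ((1 + u)\<^sup>2 - s\<^sup>2) / (4 * cnj a * cnj a)"
      by (simp add: z1_def z2_def power2_eq_square field_simps)
    also have "\<dots> = a * u / cnj a" using ca by (simp add: s2 field_simps)
    finally show ?thesis .
  qed
  have su: "z1 + z2 = (1 + u) / cnj a" using ca by (simp add: z1_def z2_def field_simps)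
  have "cmob_fixpoly a u z = cnj a * (z - z1) * (z - z2)" for z
  proof -
    have "cnj a * (z - z1) * (z - z2) = cnj a * z\<^sup>2 - cnj a * (z1 + z2) * z + cnj a * (z1 * z2)"
      by (simp add: power2_eq_square algebra_simps)
    also have "\<dots> = cmob_fixpoly a u z" using ca by (simp add: su p cmob_fixpoly_def)
    finally show ?thesis by simp
  qed
  with p show ?thesis by blast
qed

lemma cmob_two_fixpoints:
  assumes a: "norm a < 1" and u: "norm u = 1"
    and p: "norm p < 1" "cmob a u p = p" and p': "norm p' < 1" "cmob a u p' = p'" and ne: "p \<noteq> p'"
  shows "cmob a u z = z"
proof (cases "a = 0")
  case True
  have h1: "- (p * u) = p" "- (p' * u) = p'" using p p' True by (simp_all add: cmob_def mult.commute)
  have "p + p * u = 0" "p' + p' * u = 0" using h1 by (metis eq_neg_iff_add_eq_0)+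
  hence "(1 + u) * p = 0" "(1 + u) * p' = 0" by (simp_all add: algebra_simps)
  hence "1 + u = 0" using ne by auto
  hence "u = -1" by (simp add: add_eq_0_iff)
  thus ?thesis using True by (simp add: cmob_def)
next
  case False
  obtain z1 z2 where fac: "\<forall>z. cmob_fixpoly a u z = cnj a * (z - z1) * (z - z2)" and pr: "z1 * z2 = a * u / cnj a"
    using cmob_fixpoly_roots[OF False] by blast
  have "cmob_fixpoly a u p = 0" using cmob_fix_iff[OF cmob_denom_nz[OF a]] p by simp
  hence pz: "p = z1 \<or> p = z2" using fac False by simp
  have "cmob_fixpoly a u p' = 0" using cmob_fix_iff[OF cmob_denom_nz[OF a]] p' by simp
  hence pz': "p' = z1 \<or> p' = z2" using fac False by simp
  have "p * p' = z1 * z2" using pz pz' ne by (auto simp: mult.commute)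
  hence "norm p * norm p' = 1" using pr False u by (simp add: norm_mult[symmetric] norm_divide norm_mult)
  moreover have "norm p * norm p' < 1" using p p'
    by (metis mult_strict_mono' norm_ge_zero mult_1_right)
  ultimately show ?thesis by simp
qed

section \<open>A Denjoy-Wolff theorem for fixed-point-free Moebius maps of the disc\<close>

definition iterates_converge :: "(complex \<Rightarrow> complex) \<Rightarrow> complex \<Rightarrow> bool" where
  "iterates_converge g t \<longleftrightarrow>
     (\<forall>r<1. \<forall>e>0. \<exists>N. \<forall>n\<ge>N. \<forall>z. norm z \<le> r \<longrightarrow> norm ((g ^^ n) z - t) < e)"

lemma small_if_inverse_large:
  fixes x :: complex
  assumes "norm (1 / x) > 1 / e" "e > 0"
  shows "norm x < e"
proof (cases "x = 0")
  case True thus ?thesis using assms by simp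
next
  case False
  hence "1 / norm x > 1 / e" using assms by (simp add: norm_divide)
  thus ?thesis using False assms by (simp add: divide_less_eq field_simps)
qed

lemma iterates_convergeI:
  assumes "\<And>r K. r < 1 \<Longrightarrow> \<exists>N. \<forall>n\<ge>N. \<forall>z. norm z \<le> r \<longrightarrow> norm (1 / ((g ^^ n) z - t)) > K"
  shows "iterates_converge g t"
  unfolding iterates_converge_def
proof (intro allI impI)
  fix r e :: real assume "r < 1" "e > 0"
  then obtain N where "\<forall>n\<ge>N. \<forall>z. norm z \<le> r \<longrightarrow> norm (1 / ((g ^^ n) z - t)) > 1 / e"
    using assms by blast
  thus "\<exists>N. \<forall>n\<ge>N. \<forall>z. norm z \<le> r \<longrightarrow> norm ((g ^^ n) z - t) < e"
    using small_if_inverse_large \<open>e > 0\<close> by blast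
qed

lemma cmob_chart:
  assumes a: "norm a < 1" and u: "norm u = 1" and t: "norm t = 1" and P: "cmob_fixpoly a u t = 0"
    and z: "1 - cnj a * z \<noteq> 0" "z \<noteq> t"
  shows "cmob a u z \<noteq> t"
    and "1 / (cmob a u z - t) = ((1 - cnj a * t) / (t * cnj a - u)) / (z - t) + (- cnj a / (t * cnj a - u))"
proof -
  define d where "d = t * cnj a - u"
  have dnz: "d \<noteq> 0"
  proof
    assume "d = 0"
    hence "norm (t * cnj a) = norm u" by (simp add: d_def)
    thus False using a u t by (simp add: norm_mult)
  qed
  have "u * (a - z) - t * (1 - cnj a * z) = d * (z - t) + cmob_fixpoly a u t"
    by (simp add: d_def cmob_fixpoly_def power2_eq_square algebra_simps)
  hence e: "cmob a u z - t = d * (z - t) / (1 - cnj a * z)"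
    using z P by (simp add: cmob_def field_simps)
  show "cmob a u z \<noteq> t"
  proof
    assume "cmob a u z = t"
    with e have "d * (z - t) / (1 - cnj a * z) = 0" by simp
    thus False using dnz z by simp
  qed
  have "1 / (cmob a u z - t) = (1 - cnj a * z) / (d * (z - t))" using e by simp
  also have "\<dots> = ((1 - cnj a * t) / d) / (z - t) + (- cnj a / d)"
    using dnz z by (simp add: field_simps)
  finally show "1 / (cmob a u z - t) = ((1 - cnj a * t) / (t * cnj a - u)) / (z - t) + (- cnj a / (t * cnj a - u))"
    by (simp add: d_def)
qed

lemma halfplane_iff: "Re w < - 1/2 \<longleftrightarrow> norm (w + 1) < norm w"
proof -
  have "(norm (w + 1))\<^sup>2 = (norm w)\<^sup>2 + 2 * Re w + 1"
    by (simp only: cmod_power2) (simp add: power2_eq_square algebra_simps)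
  have "norm (w + 1) < norm w \<longleftrightarrow> (norm (w + 1))\<^sup>2 < (norm w)\<^sup>2"
  proof
    assume "norm (w + 1) < norm w" thus "(norm (w + 1))\<^sup>2 < (norm w)\<^sup>2"
      by (rule power_strict_mono) auto
  next
    assume "(norm (w + 1))\<^sup>2 < (norm w)\<^sup>2" thus "norm (w + 1) < norm w"
      by (rule power2_less_imp_less) simp
  qed
  thus ?thesis using \<open>(norm (w + 1))\<^sup>2 = _\<close> by auto
qed

lemma disc_to_halfplane:
  assumes t: "norm t = 1" and z: "norm z < 1"
  shows "Re (t / (z - t)) < - 1/2"
proof -
  have zt: "z - t \<noteq> 0" using t z by auto
  have "t / (z - t) + 1 = z / (z - t)" using zt by (simp add: field_simps)
  hence "norm (t / (z - t) + 1) = norm z / norm (z - t)" by (simp add: norm_divide)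
  also have "\<dots> < 1 / norm (z - t)" using z zt by (simp add: divide_strict_right_mono)
  also have "\<dots> = norm (t / (z - t))" using t by (simp add: norm_divide)
  finally show ?thesis using halfplane_iff by blast
qed

lemma halfplane_to_disc:
  assumes t: "norm t = 1" and w: "Re w < - 1/2"
  shows "norm (t + t / w) < 1" "t + t / w \<noteq> t" "t / ((t + t / w) - t) = w"
proof -
  have wnz: "w \<noteq> 0" using w by auto
  have tnz: "t \<noteq> 0" using t by auto
  have "t + t / w = t * ((w + 1) / w)" using wnz by (simp add: field_simps)
  hence "norm (t + t / w) = norm (w + 1) / norm w" using t by (simp add: norm_mult norm_divide)
  also have "\<dots> < 1" using halfplane_iff[of w] w wnz by simp
  finally show "norm (t + t / w) < 1" .
  show "t + t / w \<noteq> t" using wnz tnz by simp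
  show "t / ((t + t / w) - t) = w" using wnz tnz by simp
qed

text \<open>An affine map preserving the half-plane Re w < -1/2 has a real non-negative linear
  coefficient: otherwise a suitable point of the half-plane is mapped far outside it.\<close>

lemma affine_halfplane_coeff:
  fixes m c :: complex
  assumes h: "\<And>w. Re w < - 1/2 \<Longrightarrow> Re (m * w + c) < - 1/2"
  shows "Im m = 0" "Re m \<ge> 0"
proof -
  show im: "Im m = 0"
  proof (rule ccontr)
    assume nz: "Im m \<noteq> 0"
    define y where "y = - (\<bar>Re m\<bar> + \<bar>Re c\<bar> + 1) / Im m"
    have "Re (m * Complex (-1) y + c) < - 1/2" by (rule h) simp
    moreover have "Re (m * Complex (-1) y + c) = - Re m + (\<bar>Re m\<bar> + \<bar>Re c\<bar> + 1) + Re c"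
      using nz by (simp add: y_def field_simps)
    ultimately show False by linarith
  qed
  show "Re m \<ge> 0"
  proof (rule ccontr)
    assume neg: "\<not> Re m \<ge> 0"
    define t where "t = (\<bar>Re c\<bar> + 1) / (- Re m) + 1"
    have "(\<bar>Re c\<bar> + 1) / (- Re m) > 0" using neg by (intro divide_pos_pos) auto
    hence tpos: "t > 1" by (simp add: t_def)
    have "Re (m * of_real (- t) + c) < - 1/2" by (rule h) (use tpos in simp)
    moreover have "Re (m * of_real (- t) + c) = - Re m * t + Re c" using im by simp
    moreover have "- Re m * t = (\<bar>Re c\<bar> + 1) + (- Re m)" using neg by (simp add: t_def field_simps)
    ultimately show False using neg by linarith
  qed
qed

locale boundary_fixpoint =
  fixes a u t :: complex
  assumes a: "norm a < 1" and u: "norm u = 1" and t: "norm t = 1" and P: "cmob_fixpoly a u t = 0"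
begin

text \<open>In the chart, g acts as w |-> mu w + nu.\<close>

definition "d = t * cnj a - u"
definition "mu = (1 - cnj a * t) / d"
definition "nu = - cnj a / d"

lemma d_nz: "d \<noteq> 0"
proof
  assume "d = 0"
  hence "norm (t * cnj a) = norm u" by (simp add: d_def)
  thus False using a u t by (simp add: norm_mult)
qed

lemma mu_nz: "mu \<noteq> 0"
  using cmob_denom_nz[OF a, of t] t d_nz by (simp add: mu_def)

lemma nu_nz: "a \<noteq> 0 \<Longrightarrow> nu \<noteq> 0"
  using d_nz by (simp add: nu_def)

lemma chart_step:
  assumes "1 - cnj a * z \<noteq> 0" "z \<noteq> t"
  shows "cmob a u z \<noteq> t" "1 / (cmob a u z - t) = mu / (z - t) + nu"
  using cmob_chart[OF a u t P assms] by (simp_all add: mu_def nu_def d_def)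

lemma disc_not_pole:
  assumes "norm z < 1" shows "1 - cnj a * z \<noteq> 0" "z \<noteq> t"
  using cmob_denom_nz[OF a, of z] assms t by auto

lemma chart_iterates:
  assumes z: "norm z < 1"
  shows "1 / ((cmob a u ^^ n) z - t) = mu ^ n / (z - t) + nu * (\<Sum>k<n. mu ^ k)"
proof (induction n)
  case 0 thus ?case by simp
next
  case (Suc n)
  define y where "y = (cmob a u ^^ n) z"
  have y: "norm y < 1" using cmob_iter_disc[OF a u z] by (simp add: y_def)
  have "1 / ((cmob a u ^^ Suc n) z - t) = 1 / (cmob a u y - t)" by (simp add: y_def)
  also have "\<dots> = mu * (1 / (y - t)) + nu" using chart_step[OF disc_not_pole[OF y]] by simp
  also have "1 / (y - t) = mu ^ n / (z - t) + nu * (\<Sum>k<n. mu ^ k)" using Suc by (simp add: y_def)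
  also have "mu * (mu ^ n / (z - t) + nu * (\<Sum>k<n. mu ^ k)) + nu
      = mu ^ Suc n / (z - t) + nu * (1 + mu * (\<Sum>k<n. mu ^ k))"
    by (simp add: algebra_simps)
  also have "1 + mu * (\<Sum>k<n. mu ^ k) = (\<Sum>k<Suc n. mu ^ k)"
  proof -
    have "(\<Sum>k<Suc n. mu ^ k) = mu ^ 0 + (\<Sum>k<n. mu ^ Suc k)" by (rule sum.lessThan_Suc_shift)
    also have "(\<Sum>k<n. mu ^ Suc k) = mu * (\<Sum>k<n. mu ^ k)" by (simp add: sum_distrib_left)
    finally show ?thesis by simp
  qed
  finally show ?case .
qed

text \<open>Since g maps the disc into itself, its affine chart map preserves the half-plane
  Re w < -1/2 (after scaling by t), so mu is a positive real number.\<close>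

lemma mu_real_pos: "Im mu = 0" "Re mu > 0"
proof -
  have h: "Re (mu * w + t * nu) < - 1/2" if w: "Re w < - 1/2" for w
  proof -
    define z where "z = t + t / w"
    have z1: "norm z < 1" "z \<noteq> t" "t / (z - t) = w" using halfplane_to_disc[OF t w] by (simp_all add: z_def)
    have gz: "norm (cmob a u z) < 1" by (rule cmob_disc[OF a u z1(1)])
    have "Re (t / (cmob a u z - t)) < - 1/2" by (rule disc_to_halfplane[OF t gz])
    also have "t / (cmob a u z - t) = t * (1 / (cmob a u z - t))" by simp
    also have "\<dots> = mu * (t / (z - t)) + t * nu" using chart_step[OF disc_not_pole[OF z1(1)]] by (simp add: algebra_simps)
    finally show ?thesis using z1 by simp
  qed
  from affine_halfplane_coeff[OF h] show "Im mu = 0" by simp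
  from affine_halfplane_coeff[OF h] mu_nz show "Re mu > 0" by (simp add: complex_eq_iff)
qed

lemma mu_real: "mu = of_real (Re mu)"
  using mu_real_pos by (simp add: complex_eq_iff)

lemma chart_fixed_imp_fixed:
  assumes "1 - cnj a * z \<noteq> 0" "z \<noteq> t" "1 / (z - t) = w" "w * (1 - mu) = nu"
  shows "cmob a u z = z"
proof -
  have "1 / (cmob a u z - t) = mu * (1 / (z - t)) + nu" using chart_step[OF assms(1,2)] by simp
  hence "1 / (cmob a u z - t) = mu * w + nu" using assms(3) by simp
  also have "\<dots> = w" using assms(4) by (simp add: algebra_simps)
  finally have "1 / (cmob a u z - t) = 1 / (z - t)" using assms(3) by simp
  thus ?thesis using assms(2) chart_step(1)[OF assms(1,2)] by (simp add: field_simps)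
qed

text \<open>If mu is not 1, the affine map has the fixed point w0 in the chart, corresponding to the
  second fixed point zs of g, which lies outside the open disc when g has no fixed point there.\<close>

definition "w0 = nu / (1 - mu)"
definition "zs = t + 1 / w0"

lemma second_fixpoint:
  assumes nofix: "\<forall>z. norm z < 1 \<longrightarrow> cmob a u z \<noteq> z" and an: "a \<noteq> 0" and m1: "mu \<noteq> 1"
  shows "w0 \<noteq> 0" "zs \<noteq> t" "1 / (zs - t) = w0" "w0 * (1 - mu) = nu" "norm zs \<ge> 1"
proof -
  show w: "w0 \<noteq> 0" using nu_nz[OF an] m1 by (simp add: w0_def)
  show "zs \<noteq> t" using w by (simp add: zs_def)
  show "1 / (zs - t) = w0" by (simp add: zs_def)
  show wm: "w0 * (1 - mu) = nu" using m1 by (simp add: w0_def)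
  show "norm zs \<ge> 1"
  proof (rule ccontr)
    assume "\<not> norm zs \<ge> 1"
    hence zs1: "norm zs < 1" by simp
    have "cmob a u zs = zs"
      by (rule chart_fixed_imp_fixed[OF disc_not_pole[OF zs1] _ wm]) (simp add: zs_def)
    with nofix zs1 show False by blast
  qed
qed

lemma chart_bound:
  assumes r: "r < 1" and z: "norm z \<le> r"
  shows "norm (1 / (z - t)) \<le> 1 / (1 - r)"
proof -
  have "norm (z - t) \<ge> norm t - norm z" by (metis norm_minus_commute norm_triangle_ineq2)
  hence zt: "norm (z - t) \<ge> 1 - r" using t z by simp
  have "1 - r > 0" using r by simp
  thus ?thesis using zt by (simp add: norm_divide frac_le)
qed

text \<open>Parabolic case mu = 1: the chart is translated by nu at each step.\<close>

lemma parabolic_convergence: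
  assumes an: "a \<noteq> 0" and mu1: "mu = 1"
  shows "iterates_converge (cmob a u) t"
proof (rule iterates_convergeI)
  fix r K :: real assume r: "r < 1"
  define L where "L = 1 / (1 - r) + \<bar>K\<bar> + 1"
  have nun: "norm nu > 0" using nu_nz[OF an] by simp
  define N where "N = nat \<lceil>L / norm nu\<rceil>"
  have "norm (1 / ((cmob a u ^^ n) z - t)) > K" if n: "n \<ge> N" and z: "norm z \<le> r" for n z
  proof -
    have z1: "norm z < 1" using z r by simp
    have f: "1 / ((cmob a u ^^ n) z - t) = 1 / (z - t) + nu * of_nat n"
      using chart_iterates[OF z1, of n] mu1 by simp
    have "L / norm nu \<le> real n" using n by (simp add: N_def)
    hence Ln: "L \<le> norm nu * real n" using nun by (simp add: divide_le_eq mult.commute)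
    have "norm (nu * of_nat n) - norm (1 / (z - t)) \<le> norm (1 / (z - t) + nu * of_nat n)"
      by (metis add.commute norm_diff_ineq)
    moreover have "norm (nu * of_nat n) = norm nu * real n" by (simp add: norm_mult)
    moreover note chart_bound[OF r z]
    ultimately have "norm (1 / (z - t) + nu * of_nat n) \<ge> L - 1 / (1 - r)" using Ln by linarith
    thus ?thesis unfolding f L_def by linarith
  qed
  thus "\<exists>N. \<forall>n\<ge>N. \<forall>z. norm z \<le> r \<longrightarrow> norm (1 / ((cmob a u ^^ n) z - t)) > K" by blast
qed

lemma chart_separated:
  assumes nofix: "\<forall>z. norm z < 1 \<longrightarrow> cmob a u z \<noteq> z" and an: "a \<noteq> 0" and mu1: "mu \<noteq> 1"
    and r: "r < 1"
  shows "\<exists>\<delta>>0. \<forall>z. norm z \<le> r \<longrightarrow> norm (1 / (z - t) - w0) \<ge> \<delta>"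
proof -
  note sf = second_fixpoint[OF nofix an mu1]
  define \<delta> where "\<delta> = (1 - r) / (2 * norm (zs - t))"
  have rpos: "1 - r > 0" using r by simp
  have zst: "norm (zs - t) > 0" using sf by simp
  have "norm (1 / (z - t) - w0) \<ge> \<delta>" if z: "norm z \<le> r" for z
  proof -
    have z1: "norm z < 1" using z r by simp
    have zt: "z \<noteq> t" using disc_not_pole[OF z1] by simp
    have zt': "z - t \<noteq> 0" "zs - t \<noteq> 0" using zt sf(2) by auto
    have "1 / (z - t) - 1 / (zs - t) = (zs - z) / ((z - t) * (zs - t))"
      using zt' by (simp add: diff_frac_eq)
    hence "1 / (z - t) - w0 = (zs - z) / ((z - t) * (zs - t))" using sf(3) by simp
    hence eq: "norm (1 / (z - t) - w0) = norm (zs - z) / (norm (z - t) * norm (zs - t))"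
      by (simp add: norm_divide norm_mult)
    have "norm (zs - z) \<ge> norm zs - norm z" by (rule norm_triangle_ineq2)
    hence n1: "norm (zs - z) \<ge> 1 - r" using sf(5) z by simp
    have "norm (z - t) \<le> norm z + norm t" by (rule norm_triangle_ineq4)
    hence n2: "norm (z - t) \<le> 2" using z r t by simp
    have n3: "norm (z - t) > 0" using zt by simp
    have "(1 - r) / (2 * norm (zs - t)) \<le> norm (zs - z) / (norm (z - t) * norm (zs - t))"
      by (rule frac_le) (use rpos n1 n2 n3 zst in \<open>simp_all add: mult_pos_pos mult_right_mono\<close>)
    thus ?thesis using eq by (simp add: \<delta>_def)
  qed
  moreover have "\<delta> > 0" using rpos zst by (simp add: \<delta>_def)
  ultimately show ?thesis by blast
qed

lemma chart_iterates_w0: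
  assumes "norm z < 1" "mu \<noteq> 1"
  shows "1 / ((cmob a u ^^ n) z - t) = mu ^ n * (1 / (z - t) - w0) + w0"
proof -
  have sum: "(\<Sum>k<n. mu ^ k) = (1 - mu ^ n) / (1 - mu)" using assms(2) by (simp add: sum_gp_strict)
  have "p / y + nu * ((1 - p) / q) = p * (1 / y - nu / q) + nu / q" for p y q :: complex
    by (simp add: algebra_simps diff_divide_distrib)
  thus ?thesis using chart_iterates[OF assms(1), of n] unfolding sum w0_def by simp
qed

text \<open>Hyperbolic case mu > 1: the chart is expanded away from w0, so t is attracting.\<close>

lemma hyperbolic_convergence:
  assumes nofix: "\<forall>z. norm z < 1 \<longrightarrow> cmob a u z \<noteq> z" and an: "a \<noteq> 0" and m1: "Re mu > 1"
  shows "iterates_converge (cmob a u) t"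
proof (rule iterates_convergeI)
  fix r K :: real assume r: "r < 1"
  define m where "m = Re mu"
  have mu_m: "mu = of_real m" using mu_real by (simp add: m_def)
  have mgt: "m > 1" using m1 by (simp add: m_def)
  have mu1: "mu \<noteq> 1" using mgt mu_m by auto
  obtain \<delta> where dpos: "\<delta> > 0" and low: "\<And>z. norm z \<le> r \<Longrightarrow> norm (1 / (z - t) - w0) \<ge> \<delta>"
    using chart_separated[OF nofix an mu1 r] by blast
  obtain N where N: "(norm w0 + \<bar>K\<bar> + 1) / \<delta> < m ^ N" using real_arch_pow[OF mgt] by blast
  have "norm (1 / ((cmob a u ^^ n) z - t)) > K" if n: "n \<ge> N" and z: "norm z \<le> r" for n z
  proof -
    have z1: "norm z < 1" using z r by simp
    have mn: "m ^ n \<ge> m ^ N" using mgt n by (simp add: power_increasing)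
    have "norm (mu ^ n * (1 / (z - t) - w0)) = m ^ n * norm (1 / (z - t) - w0)"
      using mu_m mgt by (simp add: norm_mult norm_power)
    also have "\<dots> \<ge> m ^ N * \<delta>"
      by (rule mult_mono) (use mn low[OF z] dpos mgt in auto)
    finally have a1: "norm (mu ^ n * (1 / (z - t) - w0)) \<ge> m ^ N * \<delta>" .
    have "m ^ N * \<delta> > norm w0 + \<bar>K\<bar> + 1" using N dpos by (simp add: divide_less_eq)
    moreover have "norm (mu ^ n * (1 / (z - t) - w0) + w0) \<ge> norm (mu ^ n * (1 / (z - t) - w0)) - norm w0"
      by (rule norm_diff_ineq)
    ultimately show ?thesis using a1 chart_iterates_w0[OF z1 mu1, of n] by simp
  qed
  thus "\<exists>N. \<forall>n\<ge>N. \<forall>z. norm z \<le> r \<longrightarrow> norm (1 / ((cmob a u ^^ n) z - t)) > K" by blast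
qed

lemma repelling_case:
  assumes nofix: "\<forall>z. norm z < 1 \<longrightarrow> cmob a u z \<noteq> z" and an: "a \<noteq> 0" and m1: "Re mu < 1"
  shows "\<exists>t'. cmob_fixpoly a u t' = 0 \<and> norm t' = 1 \<and> t' \<noteq> t \<and> (\<lambda>n. (cmob a u ^^ n) 0) \<longlonglongrightarrow> t'"
proof -
  have mu_m: "mu = of_real (Re mu)" by (rule mu_real)
  have nm: "norm mu < 1" using mu_m mu_real_pos m1 by (metis abs_of_pos norm_of_real)
  have mu1: "mu \<noteq> 1" using nm by auto
  note sf = second_fixpoint[OF nofix an mu1]
  have "(\<lambda>n. mu ^ n * (1 / (0 - t) - w0) + w0) \<longlonglongrightarrow> 0 * (1 / (0 - t) - w0) + w0"
    by (intro tendsto_intros LIMSEQ_power_zero nm)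
  hence l1: "(\<lambda>n. 1 / ((cmob a u ^^ n) 0 - t)) \<longlonglongrightarrow> w0"
    using chart_iterates_w0[of 0, OF _ mu1] by simp
  have "(\<lambda>n. 1 / (1 / ((cmob a u ^^ n) 0 - t))) \<longlonglongrightarrow> 1 / w0"
    by (rule tendsto_divide[OF tendsto_const l1 sf(1)])
  hence "(\<lambda>n. t + ((cmob a u ^^ n) 0 - t)) \<longlonglongrightarrow> t + 1 / w0"
    by (intro tendsto_intros) simp
  hence lim: "(\<lambda>n. (cmob a u ^^ n) 0) \<longlonglongrightarrow> zs" by (simp add: zs_def)
  have "norm zs \<le> 1"
  proof (rule LIMSEQ_le_const2[OF tendsto_norm[OF lim]])
    show "\<exists>N. \<forall>n\<ge>N. norm ((cmob a u ^^ n) 0) \<le> 1"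
      using cmob_iter_disc[OF a u, of 0] by (auto intro: less_imp_le)
  qed
  hence zs1: "norm zs = 1" using sf(5) by simp
  have dn: "1 - cnj a * zs \<noteq> 0" using cmob_denom_nz[OF a] zs1 by simp
  have "cmob a u zs = zs" by (rule chart_fixed_imp_fixed[OF dn sf(2) sf(3) sf(4)])
  hence "cmob_fixpoly a u zs = 0" using cmob_fix_iff[OF dn] by simp
  thus ?thesis using zs1 sf(2) lim by blast
qed

end

definition wolff_point :: "complex \<Rightarrow> complex \<Rightarrow> complex \<Rightarrow> bool" where
  "wolff_point a u t \<longleftrightarrow> norm t = 1 \<and> cmob a u t = t \<and> iterates_converge (cmob a u) t"

lemma wolff_point_step:
  assumes a: "norm a < 1" and u: "norm u = 1" and nofix: "\<forall>z. norm z < 1 \<longrightarrow> cmob a u z \<noteq> z"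
    and an: "a \<noteq> 0" and t: "norm t = 1" and P: "cmob_fixpoly a u t = 0"
  shows "wolff_point a u t \<or> (\<exists>t'. cmob_fixpoly a u t' = 0 \<and> norm t' = 1 \<and> t' \<noteq> t \<and> (\<lambda>n. (cmob a u ^^ n) 0) \<longlonglongrightarrow> t')"
proof -
  interpret boundary_fixpoint a u t using a u t P by unfold_locales
  have t_fixed: "cmob a u t = t" using cmob_fix_iff[OF cmob_denom_nz[OF a]] t P by simp
  show ?thesis
  proof (cases rule: linorder_cases[of "Re mu" 1])
    case less
    thus ?thesis using repelling_case[OF nofix an] by blast
  next
    case equal
    hence "mu = 1" using mu_real by (simp add: complex_eq_iff)
    thus ?thesis using parabolic_convergence[OF an] t_fixed t by (simp add: wolff_point_def)
  next
    case greater
    thus ?thesis using hyperbolic_convergence[OF nofix an] t_fixed t by (simp add: wolff_point_def)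
  qed
qed

lemma cmob_boundary_fixpoint:
  assumes a: "norm a < 1" and u: "norm u = 1" and nofix: "\<forall>z. norm z < 1 \<longrightarrow> cmob a u z \<noteq> z"
  shows "a \<noteq> 0" "\<exists>t. norm t = 1 \<and> cmob_fixpoly a u t = 0"
proof -
  show an: "a \<noteq> 0"
  proof
    assume "a = 0"
    hence "cmob a u 0 = 0" by (simp add: cmob_def)
    with nofix show False by auto
  qed
  obtain z1 z2 where fac: "\<forall>z. cmob_fixpoly a u z = cnj a * (z - z1) * (z - z2)" and pr: "z1 * z2 = a * u / cnj a"
    using cmob_fixpoly_roots[OF an] by blast
  have root_out: "norm z \<ge> 1" if "cmob_fixpoly a u z = 0" for z
  proof (rule ccontr)
    assume "\<not> norm z \<ge> 1"
    hence z: "norm z < 1" by simp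
    hence "cmob a u z = z" using cmob_fix_iff[OF cmob_denom_nz[OF a]] that by simp
    with nofix z show False by blast
  qed
  have P1: "cmob_fixpoly a u z1 = 0" "cmob_fixpoly a u z2 = 0" using fac by simp_all
  have n1: "norm z1 \<ge> 1" "norm z2 \<ge> 1" using root_out P1 by auto
  have "norm (a * u / cnj a) = 1" using an u by (simp add: norm_mult norm_divide)
  hence "norm z1 * norm z2 = 1" using pr by (simp add: norm_mult[symmetric])
  hence "norm z1 \<le> 1" using n1
    by (metis mult_le_cancel_left1 norm_ge_zero order_trans zero_less_one_class.zero_le_one linorder_not_le
        mult.commute mult_less_cancel_left2 order.strict_iff_order)
  thus "\<exists>t. norm t = 1 \<and> cmob_fixpoly a u t = 0" using n1 P1 by force
qed

text \<open>Two applications of the previous dichotomy suffice, since the orbit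
  of 0 cannot converge to two different points.\<close>

theorem cmob_denjoy_wolff:
  assumes a: "norm a < 1" and u: "norm u = 1" and nofix: "\<forall>z. norm z < 1 \<longrightarrow> cmob a u z \<noteq> z"
  shows "\<exists>t. wolff_point a u t"
proof -
  note an = cmob_boundary_fixpoint(1)[OF a u nofix]
  obtain t1 where t1: "norm t1 = 1" "cmob_fixpoly a u t1 = 0"
    using cmob_boundary_fixpoint(2)[OF a u nofix] by blast
  show ?thesis
  proof (cases "wolff_point a u t1")
    case False
    then obtain t2 where t2: "cmob_fixpoly a u t2 = 0" "norm t2 = 1" "(\<lambda>n. (cmob a u ^^ n) 0) \<longlonglongrightarrow> t2"
      using wolff_point_step[OF a u nofix an t1] by blast
    show ?thesis
    proof (rule ccontr)
      assume "\<nexists>t. wolff_point a u t"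
      then obtain t3 where "t3 \<noteq> t2" "(\<lambda>n. (cmob a u ^^ n) 0) \<longlonglongrightarrow> t3"
        using wolff_point_step[OF a u nofix an t2(2) t2(1)] by blast
      with LIMSEQ_unique[OF t2(3)] show False by simp
    qed
  qed blast
qed

text \<open>The Taylor series of g at 0 has the Moebius coefficients with c = conj a; its radius of
  convergence exceeds 1, so it represents g on the closed disc and its derivative series
  converges absolutely on the unit circle.\<close>

definition cmob_fps :: "complex \<Rightarrow> complex \<Rightarrow> complex fps" where
  "cmob_fps a u = Abs_fps (mob_coeff (cnj a) a u)"

text \<open>The coefficients decay like norm a ^ n, so the radius is at least 2/(1 + norm a) > 1.\<close>

lemma cmob_fps_conv:
  assumes a: "norm a < 1" and u: "norm u = 1"
  shows "fps_conv_radius (cmob_fps a u) > 1"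
proof -
  define \<rho> where "\<rho> = 2 / (1 + norm a)"
  have ap: "1 + norm a > 0" by (simp add: add_pos_nonneg)
  have rho1: "\<rho> > 1" using a ap by (simp add: \<rho>_def less_divide_eq)
  have rpos: "\<rho> > 0" using rho1 by simp
  have ar: "norm a * \<rho> < 1" using a ap by (simp add: \<rho>_def divide_less_eq)
  have "summable (\<lambda>n. norm (fps_nth (cmob_fps a u) (Suc n) * of_real \<rho> ^ Suc n))"
  proof (rule summable_comparison_test)
    show "\<exists>N. \<forall>n\<ge>N. norm (norm (fps_nth (cmob_fps a u) (Suc n) * of_real \<rho> ^ Suc n)) \<le> 2 * \<rho> * (norm a * \<rho>) ^ n"
    proof (intro exI allI impI)
      fix n :: nat
      have "norm (norm (fps_nth (cmob_fps a u) (Suc n) * of_real \<rho> ^ Suc n))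
          = norm (mob_coeff (cnj a) a u (Suc n)) * \<rho> ^ Suc n"
        using rpos by (simp add: cmob_fps_def norm_mult norm_power)
      also have "\<dots> \<le> 2 * norm a ^ n * \<rho> ^ Suc n"
        using mob_coeff_norm_Suc[of "cnj a" a u n] a u rpos by (intro mult_right_mono) simp_all
      also have "\<dots> = 2 * \<rho> * (norm a * \<rho>) ^ n" by (simp add: power_mult_distrib)
      finally show "norm (norm (fps_nth (cmob_fps a u) (Suc n) * of_real \<rho> ^ Suc n)) \<le> 2 * \<rho> * (norm a * \<rho>) ^ n" .
    qed
    show "summable (\<lambda>n. 2 * \<rho> * (norm a * \<rho>) ^ n)"
    proof -
      have "0 \<le> norm a * \<rho>" using rpos by simp
      thus ?thesis using ar by (intro summable_mult summable_geometric) simp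
    qed
  qed
  hence "summable (\<lambda>n. norm (fps_nth (cmob_fps a u) n * of_real \<rho> ^ n))" by (subst summable_Suc_iff[symmetric])
  hence "summable (\<lambda>n. fps_nth (cmob_fps a u) n * of_real \<rho> ^ n)" by (rule summable_norm_cancel)
  hence "fps_conv_radius (cmob_fps a u) \<ge> norm (of_real \<rho> :: complex)"
    unfolding fps_conv_radius_def by (rule conv_radius_geI)
  hence "fps_conv_radius (cmob_fps a u) \<ge> ereal \<rho>" using rpos by simp
  moreover have "ereal 1 < ereal \<rho>" using rho1 by simp
  ultimately have "ereal 1 < fps_conv_radius (cmob_fps a u)" by (rule less_le_trans[rotated])
  thus ?thesis by (simp add: one_ereal_def)
qed

lemma cmob_fps_conv1:
  assumes a: "norm a < 1" and u: "norm u = 1"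
  shows "fps_conv_radius (cmob_fps a u) \<ge> 1"
  using cmob_fps_conv[OF a u] by simp

lemma cmob_fps_sums:
  assumes a: "norm a < 1" and u: "norm u = 1" and z: "norm z \<le> 1"
  shows "(\<lambda>n. fps_nth (cmob_fps a u) n * z ^ n) sums cmob a u z"
proof -
  have "ereal (norm z) \<le> 1" using z by (simp add: one_ereal_def)
  hence zr: "ereal (norm z) < fps_conv_radius (cmob_fps a u)"
    using cmob_fps_conv[OF a u] by (rule le_less_trans)
  have s: "(\<lambda>n. fps_nth (cmob_fps a u) n * z ^ n) sums eval_fps (cmob_fps a u) z" by (rule sums_eval_fps[OF zr])
  define S where "S = eval_fps (cmob_fps a u) z"
  have s': "(\<lambda>n. z ^ n * mob_coeff (cnj a) a u n) sums S"
    using s by (simp add: S_def cmob_fps_def mult.commute)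
  have "S - z * cnj a * S = a * u - z * u"
    by (rule mob_coeff_telescope[OF s']) simp
  hence "S * (1 - cnj a * z) = u * (a - z)" by (simp add: algebra_simps)
  moreover have "1 - cnj a * z \<noteq> 0" using cmob_denom_nz[OF a z] .
  ultimately have "S = cmob a u z" by (simp add: cmob_def field_simps)
  thus ?thesis using s by (simp add: S_def)
qed

lemma cmob_fps_eval:
  assumes a: "norm a < 1" and u: "norm u = 1" and z: "norm z \<le> 1"
  shows "eval_fps (cmob_fps a u) z = cmob a u z"
  using cmob_fps_sums[OF assms] by (simp add: eval_fps_def sums_iff)

lemma cmob_fps_nsum:
  assumes a: "norm a < 1" and u: "norm u = 1"
  shows "summable (\<lambda>n. real n * norm (fps_nth (cmob_fps a u) n))"
proof -
  have cr: "ereal (norm (1::complex)) < fps_conv_radius (fps_deriv (cmob_fps a u))"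
    using less_le_trans[OF cmob_fps_conv[OF a u] fps_conv_radius_deriv[of "cmob_fps a u"]] by (simp add: one_ereal_def)
  have e: "\<And>n. cmod (1 + complex_of_nat n) = 1 + real n"
    using norm_of_nat by (metis of_nat_Suc of_nat_add of_nat_1 add.commute)
  from norm_summable_fps[OF cr]
  have "summable (\<lambda>n. real (Suc n) * norm (fps_nth (cmob_fps a u) (Suc n)))"
    by (simp add: norm_mult e)
  thus ?thesis by (subst summable_Suc_iff[symmetric]) simp
qed

section \<open>Slice-preserving regular Moebius transformations\<close>

lemma slice_coefficients:
  fixes c u y0 y1 y2 :: quat
  assumes I: "I * I = -1" and w: "y0 = slice_emb I w0" "y1 = slice_emb I w1" "y2 = slice_emb I w2"
    and ne: "y1 \<noteq> y2"
    and e1: "c * y1 = 2 *\<^sub>R (y1 - y0) + u" and e2: "c * y2 = 2 *\<^sub>R (y0 - y2) + u"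
  shows "\<exists>c' u'. c = slice_emb I c' \<and> u = slice_emb I u'"
proof -
  have h: "c * (y1 - y2) = 2 *\<^sub>R (y1 - y0) - 2 *\<^sub>R (y0 - y2)" using e1 e2 by (simp add: algebra_simps)
  have d: "y1 - y2 \<noteq> 0" using ne by simp
  have "c = c * ((y1 - y2) * inverse (y1 - y2))" using d by simp
  also have "\<dots> = (2 *\<^sub>R (y1 - y0) - 2 *\<^sub>R (y0 - y2)) * inverse (y1 - y2)"
    by (simp only: mult.assoc[symmetric] h)
  also have "\<dots> = slice_emb I ((2 *\<^sub>R (w1 - w0) - 2 *\<^sub>R (w0 - w2)) / (w1 - w2))"
    by (simp add: w slice_emb_divide[OF I] slice_emb_diff slice_emb_scaleR)
  finally obtain c' where c': "c = slice_emb I c'" by blast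
  have "u = c * y1 - 2 *\<^sub>R (y1 - y0)" using e1 by simp
  also have "\<dots> = slice_emb I (c' * w1 - 2 *\<^sub>R (w1 - w0))"
    by (simp add: c' w slice_emb_mult[OF I] slice_emb_diff slice_emb_scaleR)
  finally show ?thesis using c' by blast
qed

lemma of_real_comm: "(of_real t :: quat) * x = x * of_real t"
  by (simp add: of_real_def)

lemma real_in_bslice:
  assumes "\<bar>t\<bar> < 1" shows "(of_real t :: quat) \<in> bslice I"
proof -
  have "(of_real t :: quat) = of_real t + of_real 0 * I" by simp
  hence "(of_real t :: quat) \<in> cslice I" unfolding cslice_def by blast
  thus ?thesis using assms by (simp add: bslice_def)
qed

text \<open>The relation (1 - t conj a) f(t) = (a - t) u at t = 0, 1/2, -1/2, written as linear
  equations for conj a and u.\<close>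

lemma reg_mobius_diameter_equations:
  assumes a: "norm a < 1" and u: "norm u = 1"
  defines "y1 \<equiv> reg_mobius a u (of_real (1/2))" and "y2 \<equiv> reg_mobius a u (of_real (-1/2))"
  shows "reg_mobius a u (of_real 0) = a * u"
    and "qcnj a * y1 = 2 *\<^sub>R (y1 - a * u) + u"
    and "qcnj a * y2 = 2 *\<^sub>R (a * u - y2) + u"
proof -
  have tel: "reg_mobius a u (of_real t) - (of_real t * qcnj a) * reg_mobius a u (of_real t)
      = a * u - of_real t * u" if "\<bar>t\<bar> < 1" for t
    using reg_mobius_telescope[OF a u _ of_real_comm] that by simp
  show "reg_mobius a u (of_real 0) = a * u" using tel[of 0] by simp
  have "y1 - (1/2) *\<^sub>R (qcnj a * y1) = a * u - (1/2) *\<^sub>R u"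
    using tel[of "1/2"] by (simp add: y1_def scaleR_conv_of_real mult.assoc)
  hence "(1/2::real) *\<^sub>R (qcnj a * y1) = (1/2::real) *\<^sub>R (2 *\<^sub>R (y1 - a * u) + u)"
    by (simp add: algebra_simps)
  thus "qcnj a * y1 = 2 *\<^sub>R (y1 - a * u) + u" by simp
  have "y2 + (1/2) *\<^sub>R (qcnj a * y2) = a * u + (1/2) *\<^sub>R u"
    using tel[of "-1/2"] by (simp add: y2_def scaleR_conv_of_real mult.assoc)
  hence "(1/2::real) *\<^sub>R (qcnj a * y2) = (1/2::real) *\<^sub>R (2 *\<^sub>R (a * u - y2) + u)"
    by (simp add: algebra_simps)
  thus "qcnj a * y2 = 2 *\<^sub>R (a * u - y2) + u" by simp
qed

text \<open>If an injective regular Moebius transformation maps B_I into itself, then its parameters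
  a and u lie in C_I: the values at 0, 1/2, -1/2 lie in C_I, and the two values at 1/2 and
  -1/2 differ, so the equations above can be solved inside C_I.\<close>

lemma reg_mobius_slice_params:
  assumes I: "I * I = -1" and a: "norm a < 1" and u: "norm u = 1"
    and inj: "inj_on (reg_mobius a u) qball"
    and slice: "reg_mobius a u ` bslice I \<subseteq> bslice I"
  shows "\<exists>a' u'. a = slice_emb I a' \<and> u = slice_emb I u'"
proof -
  let ?f = "reg_mobius a u"
  define y0 where "y0 = ?f (of_real 0)"
  define y1 where "y1 = ?f (of_real (1/2))"
  define y2 where "y2 = ?f (of_real (-1/2))"
  have real_vals: "?f (of_real t) \<in> cslice I" if "\<bar>t\<bar> < 1" for t
    using slice real_in_bslice[OF that] by (auto simp: bslice_def)
  have "\<bar>0::real\<bar> < 1" "\<bar>1/2::real\<bar> < 1" "\<bar>-1/2::real\<bar> < 1" by simp_all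
  then obtain w0 w1 w2 where w: "y0 = slice_emb I w0" "y1 = slice_emb I w1" "y2 = slice_emb I w2"
    using real_vals cslice_slice_emb unfolding y0_def y1_def y2_def by metis
  have ne: "y1 \<noteq> y2"
  proof
    assume "y1 = y2"
    hence fe: "?f (of_real (1/2)) = ?f (of_real (-1/2))" by (simp add: y1_def y2_def)
    have diam: "(of_real t::quat) \<in> qball" if "\<bar>t\<bar> < 1" for t using that by simp
    have "(of_real (1/2) :: quat) = of_real (-1/2)"
      by (rule inj_onD[OF inj fe]; rule diam; simp)
    thus False by (simp only: of_real_eq_iff)
  qed
  note eqs = reg_mobius_diameter_equations[OF a u, folded y0_def y1_def y2_def]
  obtain c' u' where cu: "qcnj a = slice_emb I c'" "u = slice_emb I u'"
    using slice_coefficients[OF I w ne] eqs by metis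
  have "a = slice_emb I (cnj c')" using cu(1) qcnj_slice_emb[OF I] qcnj_qcnj by metis
  thus ?thesis using cu(2) by blast
qed

lemma reg_mobius_slice_expansion:
  assumes I: "I * I = -1" and a: "norm a < 1" and u: "norm u = 1" and q: "q \<in> qball"
  shows "(\<lambda>n. q ^ n * slice_emb I (fps_nth (cmob_fps a u) n)) sums
           reg_mobius (slice_emb I a) (slice_emb I u) q"
proof -
  have coef: "slice_emb I (fps_nth (cmob_fps a u) n) = mob_coeff (qcnj (slice_emb I a)) (slice_emb I a) (slice_emb I u) n"
    for n by (simp add: cmob_fps_def slice_emb_mob_coeff[OF I] qcnj_slice_emb[OF I])
  obtain J z where J: "J * J = -1" and qz: "q = slice_emb J z" and z: "norm z < 1"
    using ball_slice_decomp[OF q] .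
  have "summable (\<lambda>n. q ^ n * slice_emb I (fps_nth (cmob_fps a u) n))"
    unfolding qz using rep_sums[OF I J cmob_fps_conv1[OF a u] z] by (rule sums_summable)
  thus ?thesis
    by (simp add: reg_mobius_def fps_reg_mobius sr_eval_def coef summable_sums)
qed

section \<open>Regular iterates of a slice extension\<close>

lemma conv_lt:
  assumes "fps_conv_radius H \<ge> 1" "norm (z::complex) < 1"
  shows "ereal (norm z) < fps_conv_radius H"
proof -
  have "ereal (norm z) < 1" using assms(2) by (simp add: one_ereal_def)
  thus ?thesis using assms(1) by (rule less_le_trans)
qed

text \<open>The star-powers of a slice function are the slice extensions of the powers of its
  restriction: evaluate the product series by the representation formula.\<close>

lemma slice_star_pow:
  assumes I: "I * I = (-1::quat)" and J: "J * J = -1"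
    and h: "sr_fps h = slice_fps I H" and H: "fps_conv_radius H \<ge> 1" and z: "norm z < 1"
  shows "sr_star_pow h k (slice_emb J z) =
           repA J I * slice_emb I (eval_fps H z ^ k) + repB J I * slice_emb I (eval_fps H (cnj z) ^ k)"
proof -
  have zc: "norm (cnj z) < 1" using z by simp
  have "sr_star_pow h k = sr_eval (slice_fps I (H ^ k))"
    by (simp add: sr_star_pow_def h slice_fps_power[OF I])
  moreover have "(\<lambda>j. slice_emb J z ^ j * slice_emb I (fps_nth (H ^ k) j)) sums
      (repA J I * slice_emb I (eval_fps (H ^ k) z) + repB J I * slice_emb I (eval_fps (H ^ k) (cnj z)))"
    by (rule rep_sums[OF I J _ z]) (use H fps_conv_radius_power[of H k] in simp)
  ultimately show ?thesis
    using eval_fps_power[OF conv_lt[OF H z]] eval_fps_power[OF conv_lt[OF H zc]]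
    by (simp add: sr_eval_def sums_iff)
qed

locale slice_mobius =
  fixes f :: "quat \<Rightarrow> quat" and I :: quat and a u :: complex
  assumes I: "I * I = -1" and a: "norm a < 1" and u: "norm u = 1"
    and fval: "\<forall>q\<in>qball. (\<lambda>n. q ^ n * slice_emb I (fps_nth (cmob_fps a u) n)) sums f q"
begin

abbreviation g where "g \<equiv> cmob a u"

lemma sr_fps_f: "sr_fps f = slice_fps I (cmob_fps a u)"
  by (rule sr_fps_eq[OF fval])

text \<open>Invariant of the induction: the n-th regular iterate sr_iter f n (that is, f composed
  n + 1 times) is the slice extension of a complex power series H representing g^(n+1).\<close>

definition iterate_expansion :: "nat \<Rightarrow> complex fps \<Rightarrow> bool" where
  "iterate_expansion n H \<longleftrightarrow> fps_conv_radius H \<ge> 1 \<and>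
      (\<forall>w. norm w < 1 \<longrightarrow> eval_fps H w = (g ^^ Suc n) w) \<and>
      (\<forall>q\<in>qball. (\<lambda>k. q ^ k * slice_emb I (fps_nth H k)) sums sr_iter f n q)"

lemma iterate_expansion_value:
  assumes inv: "iterate_expansion n H" and J: "J * J = -1" and z: "norm z < 1"
  shows "sr_iter f n (slice_emb J z) =
           repA J I * slice_emb I ((g ^^ Suc n) z) + repB J I * slice_emb I ((g ^^ Suc n) (cnj z))"
proof -
  have q: "slice_emb J z \<in> qball" using z norm_slice_emb[OF J] by simp
  have s1: "(\<lambda>k. slice_emb J z ^ k * slice_emb I (fps_nth H k)) sums sr_iter f n (slice_emb J z)"
    using inv q by (simp add: iterate_expansion_def)
  have s2: "(\<lambda>k. slice_emb J z ^ k * slice_emb I (fps_nth H k)) sums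
      (repA J I * slice_emb I (eval_fps H z) + repB J I * slice_emb I (eval_fps H (cnj z)))"
    by (rule rep_sums[OF I J _ z]) (use inv in \<open>simp add: iterate_expansion_def\<close>)
  from sums_unique2[OF s1 s2] show ?thesis
    using inv z by (simp add: iterate_expansion_def)
qed

lemma iterate_expansion_0: "iterate_expansion 0 (cmob_fps a u)"
  unfolding iterate_expansion_def using cmob_fps_conv1[OF a u] cmob_fps_eval[OF a u] fval by simp

text \<open>Induction step: f composed with the slice extension of h = g^(n+1) is, by the
  representation formula, the slice extension of g o h, which is holomorphic on the disc and
  therefore has a Taylor expansion.\<close>

lemma iterate_expansion_Suc:
  assumes inv: "iterate_expansion n H"
  shows "iterate_expansion (Suc n) (fps_expansion (g ^^ Suc (Suc n)) 0)"
proof -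
  define h where "h = g ^^ Suc n"
  define H' where "H' = fps_expansion (g ^^ Suc (Suc n)) 0"
  have Hc: "fps_conv_radius H \<ge> 1" and Hev: "\<And>w. norm w < 1 \<Longrightarrow> eval_fps H w = h w"
    and Hs: "\<forall>q\<in>qball. (\<lambda>k. q ^ k * slice_emb I (fps_nth H k)) sums sr_iter f n q"
    using inv by (simp_all add: iterate_expansion_def h_def)
  have hd: "norm (h w) < 1" if "norm w < 1" for w
    using cmob_iter_disc[OF a u that, of "Suc n"] by (simp add: h_def del: funpow.simps)
  have holo: "(g ^^ Suc (Suc n)) holomorphic_on eball 0 1"
    using cmob_iter_holo[OF a u, of "Suc (Suc n)"] by (simp add: one_ereal_def)
  have H'c: "fps_conv_radius H' \<ge> 1" unfolding H'_def by (rule conv_radius_fps_expansion[OF holo])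
  have H'ev: "eval_fps H' w = g (h w)" if "norm w < 1" for w
    using eval_fps_expansion'[OF holo, of w] that by (simp add: H'_def h_def one_ereal_def)
  have main: "(\<lambda>k. q ^ k * slice_emb I (fps_nth H' k)) sums sr_iter f (Suc n) q" if q: "q \<in> qball" for q
  proof -
    obtain J z where J: "J * J = -1" and qz: "q = slice_emb J z" and z: "norm z < 1"
      using ball_slice_decomp[OF q] .
    have zc: "norm (cnj z) < 1" using z by simp
    have sp: "sr_star_pow (sr_iter f n) k q = repA J I * slice_emb I (h z ^ k) + repB J I * slice_emb I (h (cnj z) ^ k)" for k
      using slice_star_pow[OF I J sr_fps_eq[OF Hs] Hc z] Hev[OF z] Hev[OF zc] by (simp add: qz)
    have "(\<lambda>k. (repA J I * slice_emb I (h z ^ k) + repB J I * slice_emb I (h (cnj z) ^ k)) * slice_emb I (fps_nth (cmob_fps a u) k))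
        sums (repA J I * slice_emb I (g (h z)) + repB J I * slice_emb I (g (h (cnj z))))"
      by (rule slice_pair_sums[OF I cmob_fps_sums[OF a u] cmob_fps_sums[OF a u]]) (use hd[OF z] hd[OF zc] in auto)
    hence v: "sr_iter f (Suc n) q = repA J I * slice_emb I (g (h z)) + repB J I * slice_emb I (g (h (cnj z)))"
      by (simp add: sr_comp_def sp sr_fps_f sums_iff h_def)
    have "(\<lambda>k. q ^ k * slice_emb I (fps_nth H' k)) sums
        (repA J I * slice_emb I (eval_fps H' z) + repB J I * slice_emb I (eval_fps H' (cnj z)))"
      unfolding qz by (rule rep_sums[OF I J H'c z])
    thus ?thesis using v H'ev[OF z] H'ev[OF zc] by simp
  qed
  show ?thesis unfolding iterate_expansion_def
    using H'c H'ev main by (simp add: H'_def h_def)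
qed

lemma iterate_expansion_exists: "\<exists>H. iterate_expansion n H"
proof (induction n)
  case 0 show ?case using iterate_expansion_0 by blast
next
  case (Suc n) thus ?case using iterate_expansion_Suc by blast
qed

lemma iter_value:
  assumes J: "J * J = -1" and z: "norm z < 1"
  shows "sr_iter f n (slice_emb J z) =
           repA J I * slice_emb I ((g ^^ Suc n) z) + repB J I * slice_emb I ((g ^^ Suc n) (cnj z))"
  using iterate_expansion_exists[of n] iterate_expansion_value[OF _ J z] by blast

lemma f_value:
  assumes J: "J * J = -1" and z: "norm z < 1"
  shows "f (slice_emb J z) = repA J I * slice_emb I (g z) + repB J I * slice_emb I (g (cnj z))"
  using iter_value[OF J z, of 0] by simp

lemma f_slice: "norm z < 1 \<Longrightarrow> f (slice_emb I z) = slice_emb I (g z)"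
  using f_value[OF I, of z] by (simp add: repA_I[OF I] repB_I[OF I])

end

context slice_mobius
begin

lemma identity_lifts:
  assumes gid: "\<And>z. g z = z" and q: "q \<in> qball"
  shows "f q = q"
proof -
  obtain J z where J: "J * J = -1" and qz: "q = slice_emb J z" and z: "norm z < 1"
    using ball_slice_decomp[OF q] .
  show ?thesis using f_value[OF J z] repAB_rep[OF I, of J z] qz by (simp add: gid)
qed

text \<open>A fixed point x + yJ of f either comes from the two fixed points z, conj z of g, or J
  lies in C_I: writing f(q) - q = A d1 + B d2 with d1 = g z - z, d2 = g(conj z) - conj z,
  the equation f(q) = q reads (d1 + d2) = JI (d1 - d2) in C_I.\<close>

lemma fixed_point_cases:
  assumes J: "J * J = -1" and z: "norm z < 1" and fix_q: "f (slice_emb J z) = slice_emb J z"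
  shows "(g z = z \<and> g (cnj z) = cnj z) \<or> (\<exists>j. J = slice_emb I j)"
proof -
  define d1 where "d1 = g z - z"
  define d2 where "d2 = g (cnj z) - cnj z"
  have "f (slice_emb J z) - slice_emb J z = repA J I * slice_emb I d1 + repB J I * slice_emb I d2"
    using f_value[OF J z] repAB_rep[OF I, of J z]
    by (simp add: d1_def d2_def slice_emb_diff algebra_simps)
  hence "(1/2::real) *\<^sub>R ((slice_emb I d1 + slice_emb I d2) - (J * I) * (slice_emb I d1 - slice_emb I d2)) = 0"
    using fix_q by (simp add: repAB_lin)
  hence e: "slice_emb I (d1 + d2) = (J * I) * slice_emb I (d1 - d2)"
    by (simp add: slice_emb_add slice_emb_diff)
  show ?thesis
  proof (cases "d1 = d2")
    case True
    hence "slice_emb I (d1 + d1) = 0" using e by simp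
    hence "d1 + d1 = 0" using slice_emb_inj[OF I, of "d1 + d1" 0] by simp
    thus ?thesis using True by (simp add: d1_def d2_def)
  next
    case False
    hence nz: "slice_emb I (d1 - d2) \<noteq> 0" using slice_emb_inj[OF I, of "d1 - d2" 0] by auto
    have "J * I = slice_emb I (d1 + d2) * inverse (slice_emb I (d1 - d2))"
      using e nz by (simp add: mult.assoc)
    also have "\<dots> = slice_emb I ((d1 + d2) / (d1 - d2))" by (simp add: slice_emb_divide[OF I])
    finally have JI: "J * I = slice_emb I ((d1 + d2) / (d1 - d2))" .
    have "J = (J * I) * (- I)" using I by (simp add: mult.assoc)
    also have "- I = slice_emb I (- \<i>)" by (simp add: slice_emb_uminus)
    finally have "J = slice_emb I ((d1 + d2) / (d1 - d2)) * slice_emb I (- \<i>)" using JI by simp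
    hence "J = slice_emb I ((d1 + d2) / (d1 - d2) * (- \<i>))" by (simp only: slice_emb_mult[OF I])
    thus ?thesis by blast
  qed
qed

lemma fixed_points_in_slice:
  assumes uniq: "\<And>w. norm w < 1 \<Longrightarrow> g w = w \<Longrightarrow> w = p"
    and q: "q \<in> qball" and fq: "f q = q"
  shows "q = slice_emb I p"
proof -
  obtain J z where J: "J * J = -1" and qz: "q = slice_emb J z" and z: "norm z < 1"
    using ball_slice_decomp[OF q] .
  have "(g z = z \<and> g (cnj z) = cnj z) \<or> (\<exists>j. J = slice_emb I j)"
    using fixed_point_cases[OF J z] fq qz by simp
  hence "\<exists>z'. q = slice_emb I z'"
  proof (elim disjE exE)
    assume "g z = z \<and> g (cnj z) = cnj z"
    moreover have "norm (cnj z) < 1" using z by simp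
    ultimately have "z = p" "cnj z = p" using uniq z by blast+
    hence "Im z = 0" by (metis cnj.simps(2) neg_equal_zero)
    hence "q = slice_emb I z" using qz by (simp add: slice_emb_def)
    thus ?thesis by blast
  next
    fix j assume "J = slice_emb I j"
    hence "q = slice_emb I (of_real (Re z) + of_real (Im z) * j)"
      using qz by (simp add: slice_emb_def slice_emb_add slice_emb_mult[OF I] scaleR_conv_of_real distrib_left mult.assoc)
    thus ?thesis by blast
  qed
  then obtain z' where qz': "q = slice_emb I z'" by blast
  have z': "norm z' < 1" using q qz' norm_slice_emb[OF I] by simp
  have "slice_emb I (g z') = slice_emb I z'" using f_slice[OF z'] fq qz' by simp
  hence "g z' = z'" by (rule slice_emb_inj[OF I])
  thus ?thesis using uniq z' qz' by simp
qed

text \<open>Since f is neither the identity nor elliptic, g has no fixed point in the disc: two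
  fixed points would make g, hence f, the identity; a single fixed point p of g would make
  slice_emb I p the unique fixed point of f.\<close>

lemma no_fixed_point_in_disc:
  assumes ne: "\<exists>q\<in>qball. f q \<noteq> q" and ne2: "\<not> elliptic f"
  shows "\<forall>z. norm z < 1 \<longrightarrow> g z \<noteq> z"
proof (rule ccontr)
  assume "\<not> (\<forall>z. norm z < 1 \<longrightarrow> g z \<noteq> z)"
  then obtain p where p: "norm p < 1" "g p = p" by blast
  have uniq: "w = p" if "norm w < 1" "g w = w" for w
  proof (rule ccontr)
    assume "w \<noteq> p"
    hence "g z = z" for z using cmob_two_fixpoints[OF a u p that] by simp
    thus False using identity_lifts ne by blast
  qed
  have "slice_emb I p \<in> qball" using p norm_slice_emb[OF I] by simp
  moreover have "f (slice_emb I p) = slice_emb I p" using f_slice[OF p(1)] p(2) by simp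
  ultimately have "elliptic f"
    unfolding elliptic_def using fixed_points_in_slice[OF uniq] by blast
  with ne2 show False by blast
qed

end

lemma compact_in_unit_ball:
  fixes K :: "'a::real_normed_vector set"
  assumes "compact K" "K \<subseteq> ball 0 1"
  obtains r where "r < 1" "\<And>x. x \<in> K \<Longrightarrow> norm x \<le> r"
proof (cases "K = {}")
  case False
  then obtain x0 where "x0 \<in> K" "\<forall>y\<in>K. norm y \<le> norm x0"
    using continuous_attains_sup[OF assms(1) False continuous_on_norm_id] by blast
  with assms(2) that show ?thesis by auto
qed (use that[of 0] in auto)

lemma power_diff_le:
  fixes q p :: "'a::real_normed_div_algebra"
  assumes "norm q \<le> 1" "norm p \<le> 1"
  shows "norm (q ^ n - p ^ n) \<le> real n * norm (q - p)"
proof (induction n)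
  case (Suc n)
  have "q ^ Suc n - p ^ Suc n = q * (q ^ n - p ^ n) + (q - p) * p ^ n"
    by (simp add: algebra_simps)
  hence "norm (q ^ Suc n - p ^ Suc n) \<le> norm q * norm (q ^ n - p ^ n) + norm (q - p) * norm p ^ n"
    by (metis norm_triangle_ineq norm_mult norm_power)
  also have "\<dots> \<le> 1 * (real n * norm (q - p)) + norm (q - p) * 1"
    using assms Suc by (intro add_mono mult_mono mult_left_mono) (simp_all add: power_le_one)
  finally show ?case by (simp add: algebra_simps)
qed simp

context slice_mobius
begin

lemma iterate_dist_le:
  assumes J: "J * J = -1" and z: "norm z < 1"
  shows "norm (sr_iter f n (slice_emb J z) - slice_emb I t)
           \<le> norm ((g ^^ Suc n) z - t) + norm ((g ^^ Suc n) (cnj z) - t)"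
proof -
  define h where "h = g ^^ Suc n"
  have "sr_iter f n (slice_emb J z) - slice_emb I t
      = repA J I * slice_emb I (h z - t) + repB J I * slice_emb I (h (cnj z) - t)"
    using iter_value[OF J z, of n] repAB_combine[of J I "slice_emb I t"]
    by (simp add: h_def slice_emb_diff algebra_simps)
  hence "norm (sr_iter f n (slice_emb J z) - slice_emb I t)
      \<le> norm (repA J I) * norm (h z - t) + norm (repB J I) * norm (h (cnj z) - t)"
    by (metis norm_triangle_ineq norm_mult norm_slice_emb[OF I])
  also have "\<dots> \<le> 1 * norm (h z - t) + 1 * norm (h (cnj z) - t)"
    by (intro add_mono mult_right_mono norm_repA[OF I J] norm_repB[OF I J]) simp_all
  finally show ?thesis by (simp add: h_def)
qed

lemma iterates_uniform_limit:
  assumes conv: "iterates_converge g t" and K: "compact K" "K \<subseteq> qball"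
  shows "uniform_limit K (\<lambda>n. sr_iter f n) (\<lambda>_. slice_emb I t) sequentially"
  unfolding uniform_limit_sequentially_iff
proof (intro allI impI)
  fix e :: real assume e: "e > 0"
  obtain r where r1: "r < 1" and rK: "\<And>q. q \<in> K \<Longrightarrow> norm q \<le> r"
    using compact_in_unit_ball[OF K] by blast
  obtain N where N: "\<forall>n\<ge>N. \<forall>z. norm z \<le> r \<longrightarrow> norm ((g ^^ n) z - t) < e / 2"
    using conv r1 e unfolding iterates_converge_def by (meson half_gt_zero)
  have "dist (sr_iter f n x) (slice_emb I t) < e" if n: "n \<ge> N" and x: "x \<in> K" for n x
  proof -
    obtain J z where J: "J * J = -1" and xz: "x = slice_emb J z" using quat_slice_decomp[of x] by blast
    have zr: "norm z \<le> r" and zr': "norm (cnj z) \<le> r" using rK[OF x] xz norm_slice_emb[OF J] by simp_all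
    have "norm ((g ^^ Suc n) z - t) < e / 2" "norm ((g ^^ Suc n) (cnj z) - t) < e / 2"
      using N n zr zr' by (simp_all del: funpow.simps)
    thus ?thesis using iterate_dist_le[OF J, of z n t] zr r1 xz by (simp add: dist_norm)
  qed
  thus "\<exists>N. \<forall>n\<ge>N. \<forall>x\<in>K. dist (sr_iter f n x) (slice_emb I t) < e" by blast
qed

text \<open>At a boundary fixed point t of g, f is Lipschitz towards tau = slice_emb I t with
  constant C = sum of n |a_n|, since tau is fixed by the (absolutely convergent) series.\<close>

lemma boundary_lipschitz:
  assumes t1: "norm t = 1" and gt: "g t = t" and q: "q \<in> qball"
  shows "norm (f q - slice_emb I t) \<le> (\<Sum>n. real n * norm (fps_nth (cmob_fps a u) n)) * norm (q - slice_emb I t)"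
proof -
  define \<tau> where "\<tau> = slice_emb I t"
  define c where "c = (\<lambda>n. slice_emb I (fps_nth (cmob_fps a u) n))"
  have Cs: "summable (\<lambda>n. real n * norm (fps_nth (cmob_fps a u) n))" by (rule cmob_fps_nsum[OF a u])
  have tn: "norm \<tau> = 1" using t1 norm_slice_emb[OF I] by (simp add: \<tau>_def)
  have "(\<lambda>n. slice_emb I (fps_nth (cmob_fps a u) n * t ^ n)) sums slice_emb I (g t)"
    by (rule bounded_linear.sums[OF bounded_linear_slice_emb cmob_fps_sums[OF a u]]) (use t1 in simp)
  hence st: "(\<lambda>n. \<tau> ^ n * c n) sums \<tau>"
    by (simp add: \<tau>_def c_def gt slice_emb_mult[OF I] slice_emb_power[OF I] mult.commute)
  have sd: "(\<lambda>n. (q ^ n - \<tau> ^ n) * c n) sums (f q - \<tau>)"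
    using sums_diff[OF fval[rule_format, OF q] st] by (simp add: c_def left_diff_distrib)
  have nb: "norm ((q ^ n - \<tau> ^ n) * c n) \<le> real n * norm (fps_nth (cmob_fps a u) n) * norm (q - \<tau>)" for n
  proof -
    have "norm ((q ^ n - \<tau> ^ n) * c n) = norm (q ^ n - \<tau> ^ n) * norm (fps_nth (cmob_fps a u) n)"
      by (simp add: c_def norm_mult norm_slice_emb[OF I])
    also have "\<dots> \<le> (real n * norm (q - \<tau>)) * norm (fps_nth (cmob_fps a u) n)"
      by (rule mult_right_mono[OF power_diff_le]) (use q tn in auto)
    finally show ?thesis by (simp add: algebra_simps)
  qed
  have "norm (f q - \<tau>) \<le> (\<Sum>n. real n * norm (fps_nth (cmob_fps a u) n) * norm (q - \<tau>))"
    using norm_suminf_le[OF nb summable_mult2[OF Cs]] sd by (simp add: sums_iff)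
  also have "\<dots> = (\<Sum>n. real n * norm (fps_nth (cmob_fps a u) n)) * norm (q - \<tau>)"
    by (rule suminf_mult2[symmetric, OF Cs])
  finally show ?thesis by (simp add: \<tau>_def)
qed

lemma boundary_limit:
  assumes t1: "norm t = 1" and gt: "g t = t"
  shows "(f \<longlongrightarrow> slice_emb I t) (at (slice_emb I t) within qball)"
proof -
  define C where "C = (\<Sum>n. real n * norm (fps_nth (cmob_fps a u) n))"
  have "((\<lambda>q. C * norm (q - slice_emb I t)) \<longlongrightarrow> C * norm (slice_emb I t - slice_emb I t))
          (at (slice_emb I t) within qball)"
    by (intro tendsto_intros)
  hence "((\<lambda>q. C * norm (q - slice_emb I t)) \<longlongrightarrow> 0) (at (slice_emb I t) within qball)" by simp
  moreover have "eventually (\<lambda>q. norm (f q - slice_emb I t) \<le> C * norm (q - slice_emb I t))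
                   (at (slice_emb I t) within qball)"
    using boundary_lipschitz[OF t1 gt] unfolding C_def by (auto simp: eventually_at_filter)
  ultimately have "((\<lambda>q. f q - slice_emb I t) \<longlongrightarrow> 0) (at (slice_emb I t) within qball)"
    by (rule Lim_null_comparison[rotated])
  thus ?thesis by (rule LIM_zero_cancel)
qed

end

theorem theorem5p3:
  fixes f :: "quat \<Rightarrow> quat" and a u I :: quat
  assumes "f \<in> qAut"
    and "a \<in> qball" and "norm u = 1" and "\<forall>q\<in>qball. f q = reg_mobius a u q"
    and "\<exists>q\<in>qball. f q \<noteq> q"
    and "\<not> elliptic f"
    and "I \<in> imag_units" and "f ` bslice I \<subseteq> bslice I"
  shows "\<exists>\<tau>. norm \<tau> = 1 \<and> (f \<longlongrightarrow> \<tau>) (at \<tau> within qball) \<and>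
           (\<forall>K. compact K \<and> K \<subseteq> qball \<longrightarrow>
                uniform_limit K (\<lambda>n. sr_iter f n) (\<lambda>_. \<tau>) sequentially)"
proof -
  note fm = assms(4)
  have I: "I * I = -1" using assms(7) by (simp add: imag_units_def power2_eq_square)
  have an: "norm a < 1" using assms(2) by simp
  (* f = reg_mobius a u is injective and slice preserving, so a, u lie in C_I *)
  have "inj_on (reg_mobius a u) qball"
    using assms(1) fm by (auto simp: qAut_def dest!: bij_betw_imp_inj_on intro: inj_on_cong[THEN iffD1])
  moreover have "reg_mobius a u ` bslice I \<subseteq> bslice I"
    using assms(8) fm by (auto simp: bslice_def)
  ultimately obtain a' u' where au: "a = slice_emb I a'" "u = slice_emb I u'"
    using reg_mobius_slice_params[OF I an assms(3)] by blast
  have an': "norm a' < 1" and un': "norm u' = 1" using an assms(3) au norm_slice_emb[OF I] by simp_all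
  (* hence f is the slice extension of g = cmob a' u' *)
  have "\<forall>q\<in>qball. (\<lambda>n. q ^ n * slice_emb I (fps_nth (cmob_fps a' u') n)) sums f q"
    using reg_mobius_slice_expansion[OF I an' un'] fm au by simp
  then interpret slice_mobius f I a' u' using I an' un' by unfold_locales
  (* g has no fixed point in the disc, hence a Denjoy-Wolff point t; tau = t_I works *)
  obtain t where "wolff_point a' u' t"
    using cmob_denjoy_wolff[OF an' un' no_fixed_point_in_disc[OF assms(5,6)]] by blast
  hence t: "norm t = 1" "cmob a' u' t = t" "iterates_converge (cmob a' u') t"
    by (simp_all add: wolff_point_def)
  show ?thesis
  proof (intro exI conjI allI impI)
    show "norm (slice_emb I t) = 1" using t(1) norm_slice_emb[OF I] by simp
    show "(f \<longlongrightarrow> slice_emb I t) (at (slice_emb I t) within qball)" by (rule boundary_limit[OF t(1,2)])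
    fix K assume "compact K \<and> K \<subseteq> qball"
    thus "uniform_limit K (\<lambda>n. sr_iter f n) (\<lambda>_. slice_emb I t) sequentially"
      using iterates_uniform_limit[OF t(3)] by blast
  qed
qed

end
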